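(* Let $J$ be a prime, $T,B>0$ with $JBT=1$, $R=[0,T)\times[0,B)$, and let $C$ be a scattering function with $\operatorname{supp}C\subseteq\bigcup_{j=1}^J\big(R+(a_jT,b_jB)\big)$ for pairwise distinct integer pairs $(a_j,b_j)$. Put $C_j(t,\gamma)=\chi_R(t,\gamma)\,C(t+a_jT,\gamma+b_jB)$ and $P_h(\tau,t)=\int e^{-2\pi i\gamma\tau}C(t,\gamma)\,d\gamma$. Let $(c_k)_{k\in\mathbb Z}$ be a $J$-periodic complex sequence, and define for $n\in\mathbb Z$, $0\le t<T$, $$\Pi_n(t)=\sum_{k\in\mathbb Z}\overline{c_{k+n}}\,c_k\,P_h(nT,t-kT),\qquad S_r(t,\gamma)=\frac1B\sum_{m\in\mathbb Z}e^{2\pi i\gamma T(mJ+r)}\,\Pi_{mJ+r}(t),\quad r=1,\dots,J.$$ Then for all $t\in[0,T)$, $\gamma\in[0,B)$ and $r=1,\dots,J$, $$S_r(t,\gamma)=\sum_{j=1}^J e^{-2\pi i r b_j/J}\,\overline{c_{r-a_j}}\,c_{-a_j}\,C_j(t,\gamma).$$ Consequently, if the $J\times J$ matrix $A$ with entries $A_{rj}=e^{-2\pi i r b_j/J}\,\overline{c_{r-a_j}}\,c_{-a_j}$ is invertible, with inverse $V=(V_{jr})$, then for all $j=1,\dots,J$, $t\in[0,T)$, $\gamma\in[0,B)$, $$C_j(t,\gamma)=\sum_{r=1}^J V_{jr}\,\frac1B\sum_{m\in\mathbb Z}e^{2\pi i\gamma T(mJ+r)}\,\Pi_{mJ+r}(t),$$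 and $C(t,\gamma)=\sum_{j=1}^J C_j(t-a_jT,\gamma-b_jB)$.
   Context: $\chi_R$ is the indicator function of $R$; $\overline{z}$ denotes complex conjugation. For the echo $y=Hx$ of the sounding signal $x(t)=\sum_k c_k\delta(t-kT)$ through a WSSUS operator with scattering function $C$, the functions $\Pi_n$ are exactly the second-order statistics of the echo: $\mathbb E\{\overline{y(t+nT)}\,y(\tau)\}=\Pi_n(t)\,\delta(t-\tau)$ for $0\le t,\tau<T$. The matrix $A$ equals $U^*D$ where $U$ has columns given by the Gabor (time-frequency shifted) vectors $c_{a_j,b_j}(r)=e^{-2\pi i r b_j/J}c_{r-a_j}$ (up to conjugation convention) and $D=\mathrm{diag}(c_{-a_j})$; sums over $m$ converge in the distributional sense. *)

theory Defs
  imports "HOL-Analysis.Analysis"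
begin

definition test_fun :: "real set \<Rightarrow> (real \<Rightarrow> real) \<Rightarrow> bool" where
  "test_fun U \<phi> \<longleftrightarrow>
     (\<forall>n x. ((deriv ^^ n) \<phi>) differentiable (at x)) \<and>
     compact (closure {x. \<phi> x \<noteq> 0}) \<and> closure {x. \<phi> x \<noteq> 0} \<subseteq> U"

definition rect :: "real \<Rightarrow> real \<Rightarrow> (real \<times> real) set" where
  "rect T B = {0..<T} \<times> {0..<B}"

definition Cj :: "(real \<Rightarrow> real \<Rightarrow> real) \<Rightarrow> (nat \<Rightarrow> int) \<Rightarrow> (nat \<Rightarrow> int) \<Rightarrow> real \<Rightarrow> real
                  \<Rightarrow> nat \<Rightarrow> real \<Rightarrow> real \<Rightarrow> real" where
  "Cj C a b T B j t \<gamma> = indicator (rect T B) (t, \<gamma>) * C (t + of_int (a j) * T) (\<gamma> + of_int (b j) * B)"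

definition Ph :: "(real \<Rightarrow> real \<Rightarrow> real) \<Rightarrow> real \<Rightarrow> real \<Rightarrow> complex" where
  "Ph C \<tau> t = (LINT \<gamma>|lborel. cis (- 2 * pi * \<gamma> * \<tau>) * of_real (C t \<gamma>))"

definition Pi_fun :: "(real \<Rightarrow> real \<Rightarrow> real) \<Rightarrow> (int \<Rightarrow> complex) \<Rightarrow> real \<Rightarrow> int \<Rightarrow> real \<Rightarrow> complex" where
  "Pi_fun C c T n t = (\<Sum>\<^sub>\<infinity>k::int. cnj (c (k + n)) * c k * Ph C (of_int n * T) (t - of_int k * T))"

definition A_ent :: "(int \<Rightarrow> complex) \<Rightarrow> (nat \<Rightarrow> int) \<Rightarrow> (nat \<Rightarrow> int) \<Rightarrow> nat \<Rightarrow> nat \<Rightarrow> nat \<Rightarrow> complex" where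
  "A_ent c a b J r j = cis (- 2 * pi * of_nat r * of_int (b j) / of_nat J) * cnj (c (int r - a j)) * c (- a j)"

definition is_inverse_mat :: "nat \<Rightarrow> (nat \<Rightarrow> nat \<Rightarrow> complex) \<Rightarrow> (nat \<Rightarrow> nat \<Rightarrow> complex) \<Rightarrow> bool" where
  "is_inverse_mat J A V \<longleftrightarrow>
     (\<forall>i\<in>{1..J}. \<forall>k\<in>{1..J}. (\<Sum>l=1..J. A i l * V l k) = (if i = k then 1 else 0)) \<and>
     (\<forall>i\<in>{1..J}. \<forall>k\<in>{1..J}. (\<Sum>l=1..J. V i l * A l k) = (if i = k then 1 else 0))"

text \<open>Pairing of the m-th term of S_r with a test function phi:
  (1/B) Pi_(mJ+r)(t) * integral phi(gamma) exp(2 pi i gamma T (mJ+r)) d gamma.\<close>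
definition S_term :: "(real \<Rightarrow> real \<Rightarrow> real) \<Rightarrow> (int \<Rightarrow> complex) \<Rightarrow> nat \<Rightarrow> real \<Rightarrow> real
                      \<Rightarrow> nat \<Rightarrow> real \<Rightarrow> (real \<Rightarrow> real) \<Rightarrow> int \<Rightarrow> complex" where
  "S_term C c J T B r t \<phi> m =
     of_real (1 / B) * Pi_fun C c T (m * int J + int r) t *
     (LINT \<gamma>|lborel. of_real (\<phi> \<gamma>) * cis (2 * pi * \<gamma> * T * of_int (m * int J + int r)))"

end

theory Submission
  imports Defs
begin

text \<open>By the support condition only the cell with \<open>a\<^sub>j = -k\<close> contributes to the \<open>k\<close>-th term of
  \<open>\<Pi>\<^sub>n(t)\<close>, \<open>n = mJ + r\<close>, and since \<open>JBT = 1\<close> the phase \<open>exp(-2\<pi>i nT b\<^sub>jB)\<close> equals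
  \<open>exp(-2\<pi>i r b\<^sub>j/J)\<close>. Hence \<open>\<Pi>\<^sub>n(t) = \<Sum>\<^sub>j A\<^sub>r\<^sub>j \<integral> exp(-2\<pi>i \<gamma>nT) C\<^sub>j(t,\<gamma>) d\<gamma>\<close>, and the
  pairing of \<open>S\<^sub>r\<close> with a test function \<open>\<phi>\<close> supported in \<open>(0,B)\<close> becomes a Fourier series of
  period \<open>B = 1/(JT)\<close>. The modulated test function is \<open>C\<^sup>2\<close> and periodic, so its Fourier
  coefficients are absolutely summable and its Fourier series converges to it uniformly (uniqueness
  of Fourier coefficients comes from Stone--Weierstrass on the circle); exchanging sum and integral
  gives the first identity. Inverting \<open>A\<close> recovers the \<open>C\<^sub>j\<close>, and \<open>C\<close> is the sum of its
  translated cells because the cells are disjoint.\<close>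

section \<open>Absolutely convergent series of functions\<close>

lemma summable_on_weighted_series:
  fixes d :: "'i \<Rightarrow> complex" and E :: "'i \<Rightarrow> 'x \<Rightarrow> complex"
  assumes ds: "(\<lambda>m. norm (d m)) summable_on UNIV"
    and E1: "\<And>m. norm (E m x) \<le> 1"
  shows "(\<lambda>m. norm (d m * E m x)) summable_on A"
    and "(\<lambda>m. d m * E m x) summable_on A"
proof -
  have "(\<lambda>m. norm (d m)) summable_on A"
    using ds summable_on_subset by (metis subset_UNIV)
  then show abs: "(\<lambda>m. norm (d m * E m x)) summable_on A"
    by (rule summable_on_comparison_test) (use E1 in \<open>auto simp: norm_mult intro: mult_left_le\<close>)
  then show "(\<lambda>m. d m * E m x) summable_on A"
    by (rule abs_summable_summable)
qed

lemma uniform_limit_weighted_series: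
  fixes d :: "'i \<Rightarrow> complex" and E :: "'i \<Rightarrow> 'x \<Rightarrow> complex"
  assumes ds: "(\<lambda>m. norm (d m)) summable_on UNIV"
    and E1: "\<And>m x. x \<in> X \<Longrightarrow> norm (E m x) \<le> 1"
  shows "uniform_limit X (\<lambda>F x. \<Sum>m\<in>F. d m * E m x) (\<lambda>x. \<Sum>\<^sub>\<infinity>m. d m * E m x)
           (finite_subsets_at_top UNIV)"
proof (rule uniform_limitI)
  fix e :: real assume e: "e > 0"
  define D where "D = (\<Sum>\<^sub>\<infinity>m. norm (d m))"
  have "(sum (\<lambda>m. norm (d m)) \<longlongrightarrow> D) (finite_subsets_at_top UNIV)"
    using ds by (simp add: D_def has_sum_def[symmetric] summable_iff_has_sum_infsum)
  then have "\<forall>\<^sub>F F in finite_subsets_at_top UNIV. dist (sum (\<lambda>m. norm (d m)) F) D < e"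
    using e tendstoD by blast
  then show "\<forall>\<^sub>F F in finite_subsets_at_top UNIV.
      \<forall>x\<in>X. dist (\<Sum>m\<in>F. d m * E m x) (\<Sum>\<^sub>\<infinity>m. d m * E m x) < e"
  proof (rule eventually_mono[OF eventually_conj[OF _ eventually_finite_subsets_at_top_weakI]])
    fix F :: "'i set"
    assume H: "dist (sum (\<lambda>m. norm (d m)) F) D < e \<and> finite F"
    show "\<forall>x\<in>X. dist (\<Sum>m\<in>F. d m * E m x) (\<Sum>\<^sub>\<infinity>m. d m * E m x) < e"
    proof
      fix x assume x: "x \<in> X"
      note sm = summable_on_weighted_series[of d E x, OF ds E1[OF x]]
      have dsF: "(\<lambda>m. norm (d m)) summable_on (UNIV - F)"
        using ds summable_on_subset by (metis subset_UNIV)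
      have split: "infsum g UNIV = sum g F + infsum g (UNIV - F)"
        if "g summable_on (UNIV - F)" for g :: "'i \<Rightarrow> 'c::{topological_ab_group_add, t2_space}"
      proof -
        have "infsum g UNIV = infsum g (F \<union> (UNIV - F))" by simp
        also have "\<dots> = sum g F + infsum g (UNIV - F)"
          using H that by (subst infsum_Un_disjoint) auto
        finally show ?thesis .
      qed
      have "dist (\<Sum>m\<in>F. d m * E m x) (\<Sum>\<^sub>\<infinity>m. d m * E m x) = norm (\<Sum>\<^sub>\<infinity>m\<in>UNIV - F. d m * E m x)"
        using split[OF sm(2)] by (simp add: dist_norm)
      also have "\<dots> \<le> (\<Sum>\<^sub>\<infinity>m\<in>UNIV - F. norm (d m * E m x))"
        by (rule norm_infsum_bound) (use sm(1) in auto)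
      also have "\<dots> \<le> (\<Sum>\<^sub>\<infinity>m\<in>UNIV - F. norm (d m))"
        by (rule infsum_mono) (use sm(1) dsF E1[OF x] in \<open>auto simp: norm_mult intro: mult_left_le\<close>)
      also have "\<dots> = D - sum (\<lambda>m. norm (d m)) F"
        using split[OF dsF] by (simp add: D_def)
      also have "\<dots> < e" using H by (auto simp: dist_real_def abs_less_iff)
      finally show "dist (\<Sum>m\<in>F. d m * E m x) (\<Sum>\<^sub>\<infinity>m. d m * E m x) < e" .
    qed
  qed
qed

lemma has_sum_sum:
  fixes f :: "'i \<Rightarrow> 'a \<Rightarrow> 'b::topological_comm_monoid_add"
  assumes "finite I" "\<And>i. i \<in> I \<Longrightarrow> (f i has_sum s i) A"
  shows "((\<lambda>x. \<Sum>i\<in>I. f i x) has_sum (\<Sum>i\<in>I. s i)) A"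
  using assms by (induction I rule: finite_induct) (auto intro: has_sum_add)

lemma integrable_bounded_mult:
  fixes f g :: "'a \<Rightarrow> complex"
  assumes f: "integrable M f" and g: "g \<in> borel_measurable M" and bound: "\<And>x. norm (g x) \<le> K"
  shows "integrable M (\<lambda>x. g x * f x)"
proof (rule Bochner_Integration.integrable_bound[where f="\<lambda>x. K *\<^sub>R f x"])
  show "integrable M (\<lambda>x. K *\<^sub>R f x)" using f by simp
  show "(\<lambda>x. g x * f x) \<in> borel_measurable M"
    using g borel_measurable_integrable[OF f] by measurable
  have "K \<ge> 0" using bound norm_ge_zero order_trans by blast
  then show "AE x in M. norm (g x * f x) \<le> norm (K *\<^sub>R f x)"
    using bound by (intro AE_I2) (simp add: norm_mult mult_right_mono)
qed

lemma tendsto_integral_mult_uniform_limit: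
  fixes f G :: "'a \<Rightarrow> complex" and g :: "'i \<Rightarrow> 'a \<Rightarrow> complex"
  assumes fi: "integrable M f" and f0: "\<And>x. x \<notin> X \<Longrightarrow> f x = 0"
    and lim: "uniform_limit X g G F"
    and gi: "\<And>i. integrable M (\<lambda>x. f x * g i x)" and Gi: "integrable M (\<lambda>x. f x * G x)"
  shows "((\<lambda>i. LINT x|M. f x * g i x) \<longlongrightarrow> (LINT x|M. f x * G x)) F"
proof (rule tendstoI)
  fix e :: real assume e: "e > 0"
  define K where "K = (LINT x|M. norm (f x)) + 1"
  have K: "K > 0" unfolding K_def by (smt (verit) integral_nonneg_AE norm_ge_zero AE_I2)
  then have eK: "e / K > 0" using e by simp
  show "\<forall>\<^sub>F i in F. dist (LINT x|M. f x * g i x) (LINT x|M. f x * G x) < e"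
    using uniform_limitD[OF lim eK]
  proof (rule eventually_mono)
    fix i assume H: "\<forall>x\<in>X. dist (g i x) (G x) < e / K"
    have bound: "norm (f x * (G x - g i x)) \<le> norm (f x) * (e / K)" for x
    proof (cases "x \<in> X")
      case True
      then have "norm (G x - g i x) \<le> e / K" using H by (auto simp: dist_norm norm_minus_commute less_imp_le)
      then show ?thesis unfolding norm_mult by (rule mult_left_mono) simp
    qed (simp add: f0)
    have "dist (LINT x|M. f x * g i x) (LINT x|M. f x * G x) = norm (LINT x|M. f x * (G x - g i x))"
      using gi Gi by (simp add: dist_norm norm_minus_commute right_diff_distrib)
    also have "\<dots> \<le> (LINT x|M. norm (f x) * (e / K))"
      using gi Gi fi bound
      by (intro order_trans[OF integral_norm_bound integral_mono]) (simp_all add: right_diff_distrib)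
    also have "\<dots> = e / K * (LINT x|M. norm (f x))" by (simp add: mult.commute)
    also have "\<dots> < e / K * K" using eK by (intro mult_strict_left_mono) (auto simp: K_def)
    finally show "dist (LINT x|M. f x * g i x) (LINT x|M. f x * G x) < e" using K by simp
  qed
qed

lemma has_sum_integral_swap:
  fixes d :: "'i \<Rightarrow> complex" and E :: "'i \<Rightarrow> real \<Rightarrow> complex"
    and f G :: "real \<Rightarrow> complex"
  assumes ds: "(\<lambda>m. norm (d m)) summable_on UNIV"
    and E1: "\<And>m x. x \<in> X \<Longrightarrow> norm (E m x) \<le> 1"
    and Em: "\<And>m. E m \<in> borel_measurable lborel"
    and fi: "integrable lborel f" and f0: "\<And>x. x \<notin> X \<Longrightarrow> f x = 0"
    and G: "\<And>x. x \<in> X \<Longrightarrow> ((\<lambda>m. d m * E m x) has_sum G x) UNIV"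
    and Gm: "G \<in> borel_measurable lborel"
  shows "((\<lambda>m. LINT x|lborel. f x * (d m * E m x)) has_sum (LINT x|lborel. f x * G x)) UNIV"
proof -
  have G_eq: "G x = (\<Sum>\<^sub>\<infinity>m. d m * E m x)" if "x \<in> X" for x
    using G[OF that] by (simp add: infsumI)
  have int_bound: "integrable lborel (\<lambda>x. f x * g x)"
    if "g \<in> borel_measurable lborel" "\<And>x. x \<in> X \<Longrightarrow> norm (g x) \<le> K" for g K
  proof (rule Bochner_Integration.integrable_bound[where f="\<lambda>x. max K 0 *\<^sub>R f x"])
    show "integrable lborel (\<lambda>x. max K 0 *\<^sub>R f x)" using fi by simp
    show "(\<lambda>x. f x * g x) \<in> borel_measurable lborel"
      using that(1) borel_measurable_integrable[OF fi] by measurable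
    have "norm (f x * g x) \<le> norm (max K 0 *\<^sub>R f x)" for x
    proof (cases "x \<in> X")
      case True
      then have "norm (g x) \<le> max K 0" using that(2) by fastforce
      then show ?thesis by (simp add: norm_mult mult.commute[of _ "norm (f x)"] mult_left_mono)
    qed (simp add: f0)
    then show "AE x in lborel. norm (f x * g x) \<le> norm (max K 0 *\<^sub>R f x)" by simp
  qed
  have int_m: "integrable lborel (\<lambda>x. f x * (d m * E m x))" for m
    by (rule int_bound[where K="norm (d m)"]) (use Em E1 in \<open>auto simp: norm_mult intro: mult_left_le\<close>)
  have int_G: "integrable lborel (\<lambda>x. f x * G x)"
  proof (rule int_bound[OF Gm])
    fix x assume x: "x \<in> X"
    note sm = summable_on_weighted_series[of d E x, OF ds E1[OF x]]
    have "norm (G x) \<le> (\<Sum>\<^sub>\<infinity>m. norm (d m * E m x))"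
      unfolding G_eq[OF x] by (rule norm_infsum_bound) (use sm in auto)
    also have "\<dots> \<le> (\<Sum>\<^sub>\<infinity>m. norm (d m))"
      by (rule infsum_mono) (use sm ds E1[OF x] in \<open>auto simp: norm_mult intro: mult_left_le\<close>)
    finally show "norm (G x) \<le> (\<Sum>\<^sub>\<infinity>m. norm (d m))" .
  qed
  have f_G: "f x * G x = f x * (\<Sum>\<^sub>\<infinity>m. d m * E m x)" for x
    using G_eq f0 by (cases "x \<in> X") auto
  have "((\<lambda>F. LINT x|lborel. f x * (\<Sum>m\<in>F. d m * E m x))
      \<longlongrightarrow> (LINT x|lborel. f x * (\<Sum>\<^sub>\<infinity>m. d m * E m x))) (finite_subsets_at_top UNIV)"
  proof (rule tendsto_integral_mult_uniform_limit[OF fi f0 uniform_limit_weighted_series[OF ds E1]])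
    show "integrable lborel (\<lambda>x. f x * (\<Sum>m\<in>F. d m * E m x))" for F
      using Bochner_Integration.integrable_sum[of F lborel "\<lambda>m x. f x * (d m * E m x)", OF int_m]
      by (simp add: sum_distrib_left)
    show "integrable lborel (\<lambda>x. f x * (\<Sum>\<^sub>\<infinity>m. d m * E m x))"
      using int_G by (simp add: f_G)
  qed
  moreover have "(LINT x|lborel. f x * (\<Sum>m\<in>F. d m * E m x)) = (\<Sum>m\<in>F. LINT x|lborel. f x * (d m * E m x))" for F
    by (subst Bochner_Integration.integral_sum[symmetric]) (use int_m in \<open>auto simp: sum_distrib_left\<close>)
  ultimately show ?thesis
    unfolding has_sum_def by (simp add: f_G)
qed

section \<open>Fourier coefficients on an interval\<close>

definition fourier_exp :: "real \<Rightarrow> int \<Rightarrow> real \<Rightarrow> complex" where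
  "fourier_exp L k x = cis (2 * pi * of_int k * x / L)"

lemma has_vector_derivative_cis_linear:
  "((\<lambda>x. cis (w * x)) has_vector_derivative (\<i> * of_real w * cis (w * x))) (at x within S)"
proof -
  have "((\<lambda>x. cis (w * x)) has_derivative (\<lambda>t. (w * t) *\<^sub>R (\<i> * cis (w * x)))) (at x within S)"
    by (auto intro!: derivative_eq_intros)
  moreover have "(\<lambda>t. (w * t) *\<^sub>R (\<i> * cis (w * x))) = (\<lambda>t. t *\<^sub>R (\<i> * of_real w * cis (w * x)))"
    by (auto simp: scaleR_conv_of_real)
  ultimately show ?thesis by (simp add: has_vector_derivative_def)
qed

lemma fourier_exp_linear: "fourier_exp L k x = cis ((2 * pi * of_int k / L) * x)"
  by (simp add: fourier_exp_def)

lemma fourier_exp_has_vector_derivative: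
  "(fourier_exp L k has_vector_derivative (\<i> * of_real (2 * pi * of_int k / L) * fourier_exp L k x))
     (at x within S)"
  unfolding fourier_exp_linear[abs_def] fourier_exp_linear by (rule has_vector_derivative_cis_linear)

lemma fourier_exp_0 [simp]: "fourier_exp L k 0 = 1"
  by (simp add: fourier_exp_def)

lemma fourier_exp_period [simp]: "L \<noteq> 0 \<Longrightarrow> fourier_exp L k L = 1"
  by (simp add: fourier_exp_def)

lemma norm_fourier_exp [simp]: "norm (fourier_exp L k x) = 1"
  by (simp add: fourier_exp_def)

lemma fourier_exp_mult: "fourier_exp L k x * fourier_exp L l x = fourier_exp L (k + l) x"
  unfolding fourier_exp_def by (simp add: cis_mult distrib_left distrib_right add_divide_distrib)

lemma cnj_fourier_exp: "cnj (fourier_exp L k x) = fourier_exp L (- k) x"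
  by (simp add: fourier_exp_def complex_eq_iff)

lemma continuous_on_fourier_exp [continuous_intros]: "continuous_on S (fourier_exp L k)"
  unfolding fourier_exp_linear[abs_def] by (intro continuous_intros)

lemma fourier_exp_measurable [measurable]: "fourier_exp L k \<in> borel_measurable lborel"
  by (simp add: borel_measurable_continuous_onI continuous_on_fourier_exp measurable_lborel1)

lemma set_integral_fourier_exp:
  assumes L: "L > 0"
  shows "(LINT x:{0..L}|lborel. fourier_exp L k x) = (if k = 0 then of_real L else 0)"
proof (cases "k = 0")
  case True
  then show ?thesis using L by (simp add: fourier_exp_def set_integral_const scaleR_conv_of_real)
next
  case False
  define w where "w = \<i> * of_real (2 * pi * of_int k / L)"
  have w0: "w \<noteq> 0" using False L by (simp add: w_def)
  have "(LINT x:{0..L}|lborel. fourier_exp L k x) = fourier_exp L k L / w - fourier_exp L k 0 / w"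
    unfolding set_lebesgue_integral_def
  proof (rule integral_FTC_atLeastAtMost)
    fix x show "((\<lambda>x. fourier_exp L k x / w) has_vector_derivative fourier_exp L k x) (at x within {0..L})"
      using fourier_exp_has_vector_derivative[of L k x "{0..L}"] w0 unfolding w_def[symmetric]
      by (auto intro!: derivative_eq_intros)
  qed (use L in \<open>auto intro: continuous_intros\<close>)
  also have "\<dots> = 0" using L by simp
  finally show ?thesis using False by simp
qed

lemma set_integral_norm_le:
  fixes f :: "'a \<Rightarrow> 'b::{banach, second_countable_topology}"
  shows "norm (LINT x:A|M. f x) \<le> (LINT x:A|M. norm (f x))"
proof -
  have "norm (LINT x|M. indicator A x *\<^sub>R f x) \<le> (LINT x|M. norm (indicator A x *\<^sub>R f x))"
    by (rule integral_norm_bound)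
  also have "(\<lambda>x. norm (indicator A x *\<^sub>R f x)) = (\<lambda>x. indicator A x *\<^sub>R norm (f x))"
    by (auto simp: indicator_def)
  finally show ?thesis unfolding set_lebesgue_integral_def .
qed

lemma set_integral_cnj:
  fixes f :: "'a \<Rightarrow> complex"
  shows "(LINT x:A|M. cnj (f x)) = cnj (LINT x:A|M. f x)"
proof -
  have "(\<lambda>x. indicator A x *\<^sub>R cnj (f x)) = (\<lambda>x. cnj (indicator A x *\<^sub>R f x))"
    by (auto simp: indicator_def)
  then show ?thesis
    unfolding set_lebesgue_integral_def by (simp only: Bochner_Integration.integral_cnj)
qed

lemma set_integral_deriv_fourier_exp:
  fixes h h' :: "real \<Rightarrow> complex"
  assumes L: "L > 0"
    and hd: "\<And>x. x \<in> {0..L} \<Longrightarrow> (h has_vector_derivative h' x) (at x within {0..L})"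
    and h'c: "continuous_on {0..L} h'"
    and hL: "h L = h 0"
  shows "(LINT x:{0..L}|lborel. h' x * fourier_exp L k x)
         = - (\<i> * of_real (2 * pi * of_int k / L)) * (LINT x:{0..L}|lborel. h x * fourier_exp L k x)"
proof -
  define w where "w = \<i> * of_real (2 * pi * of_int k / L)"
  have hc: "continuous_on {0..L} h" using hd continuous_on_vector_derivative by blast
  have i1: "set_integrable lborel {0..L} (\<lambda>x. h' x * fourier_exp L k x)"
    by (rule borel_integrable_atLeastAtMost') (intro continuous_intros h'c)
  have i2: "set_integrable lborel {0..L} (\<lambda>x. w * (h x * fourier_exp L k x))"
    by (rule borel_integrable_atLeastAtMost') (intro continuous_intros hc)
  have "(LINT x:{0..L}|lborel. h' x * fourier_exp L k x + w * (h x * fourier_exp L k x))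
      = h L * fourier_exp L k L - h 0 * fourier_exp L k 0"
    unfolding set_lebesgue_integral_def
  proof (rule integral_FTC_atLeastAtMost)
    fix x assume x: "0 \<le> x" "x \<le> L"
    have "((\<lambda>x. h x * fourier_exp L k x) has_vector_derivative
          (h x * (w * fourier_exp L k x) + h' x * fourier_exp L k x)) (at x within {0..L})"
      by (rule has_vector_derivative_mult[OF hd fourier_exp_has_vector_derivative[of L k x, folded w_def]])
         (use x in auto)
    then show "((\<lambda>x. h x * fourier_exp L k x) has_vector_derivative
          h' x * fourier_exp L k x + w * (h x * fourier_exp L k x)) (at x within {0..L})"
      by (simp add: algebra_simps)
  qed (use L in \<open>auto intro!: continuous_intros h'c hc\<close>)
  also have "\<dots> = 0" using L hL by simp
  finally have "(LINT x:{0..L}|lborel. h' x * fourier_exp L k x)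
      + (LINT x:{0..L}|lborel. w * (h x * fourier_exp L k x)) = 0"
    using set_integral_add(2)[OF i1 i2] by simp
  then show ?thesis unfolding w_def[symmetric] by (simp add: eq_neg_iff_add_eq_0)
qed

text \<open>With this sign convention \<open>fourier_coeff L h k\<close> is the coefficient of \<open>fourier_exp L (- k)\<close>
  in the Fourier series of \<open>h\<close> on \<open>[0, L]\<close>.\<close>

definition fourier_coeff :: "real \<Rightarrow> (real \<Rightarrow> complex) \<Rightarrow> int \<Rightarrow> complex" where
  "fourier_coeff L h k = (LINT x:{0..L}|lborel. h x * fourier_exp L k x) / of_real L"

lemma fourier_coeff_quadratic_decay:
  fixes h h1 h2 :: "real \<Rightarrow> complex"
  assumes L: "L > 0"
    and hd: "\<And>x. (h has_vector_derivative h1 x) (at x)"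
    and h1d: "\<And>x. (h1 has_vector_derivative h2 x) (at x)"
    and h2c: "continuous_on {0..L} h2"
    and hL: "h L = h 0" and h1L: "h1 L = h1 0"
  obtains M where "\<And>k. norm (fourier_coeff L h k) \<le> M / (1 + real_of_int k ^ 2)"
proof -
  define I where "I k = (LINT x:{0..L}|lborel. h x * fourier_exp L k x)" for k
  define N0 where "N0 = (LINT x:{0..L}|lborel. norm (h x))"
  define N2 where "N2 = (LINT x:{0..L}|lborel. norm (h2 x))"
  define M where "M = N0 + (L / (2 * pi))^2 * N2"
  have h1c: "continuous_on {0..L} h1"
    by (rule continuous_on_vector_derivative) (use h1d has_vector_derivative_at_within in blast)
  have I2: "(LINT x:{0..L}|lborel. h2 x * fourier_exp L k x) = - of_real ((2 * pi * k / L)^2) * I k" for k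
  proof -
    have "(LINT x:{0..L}|lborel. h2 x * fourier_exp L k x)
        = - (\<i> * of_real (2 * pi * of_int k / L)) * (LINT x:{0..L}|lborel. h1 x * fourier_exp L k x)"
      by (rule set_integral_deriv_fourier_exp[OF L _ h2c h1L]) (use h1d has_vector_derivative_at_within in blast)
    also have "\<dots> = - (\<i> * of_real (2 * pi * of_int k / L)) * (- (\<i> * of_real (2 * pi * of_int k / L)) * I k)"
      unfolding I_def
      by (subst set_integral_deriv_fourier_exp[OF L _ h1c hL]) (use hd has_vector_derivative_at_within in blast)+
    finally show ?thesis by (simp add: power2_eq_square algebra_simps)
  qed
  have bound: "(1 + real_of_int k ^ 2) * norm (I k) \<le> M" for k
  proof -
    have "norm (I k) \<le> N0"
      using set_integral_norm_le[of lborel "{0..L}" "\<lambda>x. h x * fourier_exp L k x"]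
      unfolding I_def N0_def by (simp add: norm_mult)
    moreover have "(2 * pi / L)^2 * (real_of_int k ^ 2 * norm (I k))
        = norm (LINT x:{0..L}|lborel. h2 x * fourier_exp L k x)"
      unfolding I2 mult_minus_left norm_minus_cancel norm_mult norm_of_real abs_power2
      by (simp add: power_mult_distrib power_divide)
    moreover have "norm (LINT x:{0..L}|lborel. h2 x * fourier_exp L k x) \<le> N2"
      using set_integral_norm_le[of lborel "{0..L}" "\<lambda>x. h2 x * fourier_exp L k x"]
      unfolding N2_def by (simp add: norm_mult)
    ultimately have "real_of_int k ^ 2 * norm (I k) \<le> (L / (2 * pi))^2 * N2"
      using L by (simp add: field_simps power_divide)
    with \<open>norm (I k) \<le> N0\<close> show ?thesis by (simp add: M_def algebra_simps)
  qed
  show ?thesis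
  proof (rule that[of "M / L"])
    fix k
    have "norm (fourier_coeff L h k) = norm (I k) / L"
      using L by (simp add: fourier_coeff_def I_def norm_divide)
    also have "\<dots> \<le> M / (1 + real_of_int k ^ 2) / L"
      using bound[of k] L by (intro divide_right_mono) (simp_all add: field_simps add_pos_nonneg)
    finally show "norm (fourier_coeff L h k) \<le> M / L / (1 + real_of_int k ^ 2)" by (simp add: mult.commute)
  qed
qed

lemma summable_on_inverse_square_int: "(\<lambda>k::int. 1 / (1 + real_of_int k ^ 2)) summable_on UNIV"
proof -
  let ?g = "\<lambda>k::int. 1 / (1 + real_of_int k ^ 2)"
  have summable_nat: "summable (\<lambda>n::nat. 1 / (1 + real n ^ 2))"
  proof (rule summable_comparison_test'[where N=1])
    show "summable (\<lambda>n::nat. inverse (real n ^ 2))"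
      by (rule inverse_power_summable) auto
    fix n :: nat assume "n \<ge> 1"
    then show "norm (1 / (1 + real n ^ 2)) \<le> inverse (real n ^ 2)"
      by (simp add: divide_simps) (smt (verit) zero_le_power2)
  qed
  have pos: "?g summable_on range int"
    using summable_nat by (subst summable_on_reindex) (auto simp: o_def summable_on_UNIV_nonneg_real_iff)
  have "summable (\<lambda>n. ?g (- int n - 1))"
  proof (rule summable_comparison_test'[where N=0, OF summable_nat])
    fix n :: nat
    have "real n ^ 2 \<le> (- real n - 1) ^ 2" by (simp add: power2_eq_square algebra_simps)
    then show "norm (?g (- int n - 1)) \<le> 1 / (1 + real n ^ 2)"
      by (auto intro!: divide_left_mono mult_pos_pos simp: add_pos_nonneg)
  qed
  then have neg: "?g summable_on range (\<lambda>n. - int n - 1)"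
    by (subst summable_on_reindex) (auto simp: inj_on_def o_def summable_on_UNIV_nonneg_real_iff)
  have "UNIV = range int \<union> range (\<lambda>n. - int n - 1)"
  proof -
    have "k \<in> range int \<union> range (\<lambda>n. - int n - 1)" for k :: int
    proof (cases "k \<ge> 0")
      case True then show ?thesis by (metis UnI1 nonneg_int_cases rangeI)
    next
      case False
      then have "k = - int (nat (- k - 1)) - 1" by simp
      then show ?thesis by blast
    qed
    then show ?thesis by blast
  qed
  then show ?thesis using summable_on_Un_disjoint[OF pos neg] by force
qed

lemma fourier_coeff_abs_summable:
  fixes h h1 h2 :: "real \<Rightarrow> complex"
  assumes L: "L > 0"
    and hd: "\<And>x. (h has_vector_derivative h1 x) (at x)"
    and h1d: "\<And>x. (h1 has_vector_derivative h2 x) (at x)"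
    and h2c: "continuous_on {0..L} h2"
    and hL: "h L = h 0" and h1L: "h1 L = h1 0"
  shows "(\<lambda>k. norm (fourier_coeff L h k)) summable_on UNIV"
proof -
  obtain M where M: "\<And>k. norm (fourier_coeff L h k) \<le> M / (1 + real_of_int k ^ 2)"
    using fourier_coeff_quadratic_decay[OF assms] by blast
  have "(\<lambda>k::int. M * (1 / (1 + real_of_int k ^ 2))) summable_on UNIV"
    by (rule summable_on_cmult_right[OF summable_on_inverse_square_int])
  then show ?thesis
    by (rule summable_on_comparison_test) (use M in auto)
qed

section \<open>Uniqueness of Fourier coefficients\<close>

definition trig_poly :: "real \<Rightarrow> (complex \<times> int) list \<Rightarrow> real \<Rightarrow> complex" where
  "trig_poly L xs x = sum_list (map (\<lambda>(a, k). a * fourier_exp L k x) xs)"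

lemma trig_poly_Nil [simp]: "trig_poly L [] x = 0"
  by (simp add: trig_poly_def)

lemma trig_poly_Cons [simp]: "trig_poly L ((a, k) # xs) x = a * fourier_exp L k x + trig_poly L xs x"
  by (simp add: trig_poly_def)

lemma trig_poly_append [simp]: "trig_poly L (xs @ ys) x = trig_poly L xs x + trig_poly L ys x"
  by (simp add: trig_poly_def)

lemma trig_poly_mult_monomial:
  "a * fourier_exp L k x * trig_poly L ys x = trig_poly L (map (\<lambda>(b, l). (a * b, k + l)) ys) x"
  by (induction ys) (auto simp: algebra_simps simp flip: fourier_exp_mult)

lemma trig_poly_mult:
  "trig_poly L xs x * trig_poly L ys x
    = trig_poly L (concat (map (\<lambda>(a, k). map (\<lambda>(b, l). (a * b, k + l)) ys) xs)) x"
  by (induction xs) (auto simp: algebra_simps simp flip: trig_poly_mult_monomial)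

lemma continuous_on_trig_poly [continuous_intros]: "continuous_on S (trig_poly L xs)"
  unfolding trig_poly_def by (induction xs) (auto intro!: continuous_intros)

lemma real_polynomial_function_on_circle_eq_trig_poly:
  fixes P :: "complex \<Rightarrow> real"
  assumes "real_polynomial_function P"
  obtains xs where "\<And>x. complex_of_real (P (fourier_exp L 1 x)) = trig_poly L xs x"
proof -
  have "\<exists>xs. \<forall>x. complex_of_real (P (fourier_exp L 1 x)) = trig_poly L xs x"
    using assms
  proof (induction P rule: real_polynomial_function.induct)
    case (linear f)
    have fz: "f z = Re z * f 1 + Im z * f \<i>" for z
    proof -
      have "z = Re z *\<^sub>R 1 + Im z *\<^sub>R \<i>" by (simp add: complex_eq_iff)
      then have "f z = f (Re z *\<^sub>R 1 + Im z *\<^sub>R \<i>)" by simp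
      also have "\<dots> = Re z * f 1 + Im z * f \<i>"
        using linear.hyps[THEN bounded_linear.linear] by (simp add: linear_add linear_scale)
      finally show ?thesis .
    qed
    have Re: "complex_of_real (Re (fourier_exp L 1 x)) = (fourier_exp L 1 x + fourier_exp L (-1) x) / 2"
      and Im: "complex_of_real (Im (fourier_exp L 1 x)) = (fourier_exp L 1 x - fourier_exp L (-1) x) / (2 * \<i>)"
      for x by (simp_all add: fourier_exp_def complex_eq_iff)
    show ?case
    proof (intro exI allI)
      fix x
      show "complex_of_real (f (fourier_exp L 1 x)) =
        trig_poly L [(of_real (f 1) / 2 + of_real (f \<i>) / (2 * \<i>), 1),
                     (of_real (f 1) / 2 - of_real (f \<i>) / (2 * \<i>), -1)] x"
        unfolding fz[of "fourier_exp L 1 x"] of_real_add of_real_mult Re Im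
        by (simp add: field_simps)
    qed
  next
    case (const c)
    show ?case by (rule exI[of _ "[(of_real c, 0)]"]) (simp add: fourier_exp_def)
  next
    case (add f g)
    then obtain xs ys where "\<forall>x. complex_of_real (f (fourier_exp L 1 x)) = trig_poly L xs x"
      "\<forall>x. complex_of_real (g (fourier_exp L 1 x)) = trig_poly L ys x" by blast
    then show ?case by (intro exI[of _ "xs @ ys"]) simp
  next
    case (mult f g)
    then obtain xs ys where "\<forall>x. complex_of_real (f (fourier_exp L 1 x)) = trig_poly L xs x"
      "\<forall>x. complex_of_real (g (fourier_exp L 1 x)) = trig_poly L ys x" by blast
    then show ?case
      by (intro exI[of _ "concat (map (\<lambda>(a, k). map (\<lambda>(b, l). (a * b, k + l)) ys) xs)"])
         (simp add: trig_poly_mult[symmetric])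
  qed
  then show ?thesis using that by blast
qed

lemma set_integral_mult_trig_poly_eq_0:
  fixes u :: "real \<Rightarrow> complex"
  assumes uc: "continuous_on {0..L} u"
    and coef: "\<And>k. (LINT x:{0..L}|lborel. u x * fourier_exp L k x) = 0"
  shows "(LINT x:{0..L}|lborel. u x * trig_poly L xs x) = 0"
proof (induction xs)
  case (Cons p xs)
  obtain a k where p: "p = (a, k)" by (cases p)
  have i1: "set_integrable lborel {0..L} (\<lambda>x. a * (u x * fourier_exp L k x))"
    by (rule borel_integrable_atLeastAtMost') (intro continuous_intros uc)
  have i2: "set_integrable lborel {0..L} (\<lambda>x. u x * trig_poly L xs x)"
    by (rule borel_integrable_atLeastAtMost') (intro continuous_intros uc)
  have "(LINT x:{0..L}|lborel. u x * trig_poly L (p # xs) x)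
      = (LINT x:{0..L}|lborel. a * (u x * fourier_exp L k x) + u x * trig_poly L xs x)"
    by (simp add: p algebra_simps)
  also have "\<dots> = a * (LINT x:{0..L}|lborel. u x * fourier_exp L k x)
      + (LINT x:{0..L}|lborel. u x * trig_poly L xs x)"
    using set_integral_add(2)[OF i1 i2] by simp
  also have "\<dots> = 0" using coef Cons.IH by simp
  finally show ?case .
qed simp

lemma fourier_exp_1_image:
  assumes L: "L > 0"
  shows "fourier_exp L 1 ` {0..L} = sphere 0 1"
proof
  show "fourier_exp L 1 ` {0..L} \<subseteq> sphere 0 1" by (auto simp: fourier_exp_def)
  show "sphere 0 1 \<subseteq> fourier_exp L 1 ` {0..L}"
  proof
    fix z :: complex assume "z \<in> sphere 0 1"
    then have z: "cis (Arg2pi z) = z"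
      using complex_norm_eq_1_exp by (simp add: cis_conv_exp)
    define x where "x = L * Arg2pi z / (2 * pi)"
    have "x \<in> {0..L}"
      using L Arg2pi_ge_0[of z] Arg2pi_lt_2pi[of z] by (auto simp: x_def field_simps)
    moreover have "fourier_exp L 1 x = z" using L z by (simp add: fourier_exp_def x_def)
    ultimately show "z \<in> fourier_exp L 1 ` {0..L}" by force
  qed
qed

lemma fourier_exp_1_eq_imp:
  assumes L: "L > 0" and x: "x \<in> {0..L}" and y: "y \<in> {0..L}"
    and e: "fourier_exp L 1 x = fourier_exp L 1 y"
  shows "x = y \<or> (x = 0 \<and> y = L) \<or> (x = L \<and> y = 0)"
proof -
  have "sin (2 * pi * x / L) = sin (2 * pi * y / L) \<and> cos (2 * pi * x / L) = cos (2 * pi * y / L)"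
    using e unfolding fourier_exp_def by (simp add: complex_eq_iff)
  then obtain n :: int where "2 * pi * x / L = 2 * pi * y / L + 2 * pi * n"
    using sin_cos_eq_iff by blast
  then have "2 * pi * (x - y - n * L) / L = 0" using L by (simp add: field_simps)
  then have xy: "x - y = n * L" using L by simp
  have "\<bar>x - y\<bar> \<le> L" using x y by auto
  then have "\<bar>real_of_int n\<bar> * L \<le> 1 * L"
    using xy L by (simp add: abs_mult)
  then have "\<bar>n\<bar> \<le> 1" using L by (simp add: mult_le_cancel_right)
  then have "n = 0 \<or> n = 1 \<or> n = -1" by linarith
  then show ?thesis using xy x y by auto
qed

lemma continuous_on_circle_lift:
  fixes w :: "real \<Rightarrow> real"
  assumes L: "L > 0" and wc: "continuous_on {0..L} w" and wL: "w L = w 0"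
  obtains F where "continuous_on (sphere 0 1) F" "\<And>x. x \<in> {0..L} \<Longrightarrow> F (fourier_exp L 1 x) = w x"
proof -
  let ?X = "top_of_set {0..L}" and ?Y = "top_of_set (sphere (0::complex) 1)"
  have q: "quotient_map ?X ?Y (fourier_exp L 1)"
  proof (rule continuous_imp_quotient_map)
    show "continuous_map ?X ?Y (fourier_exp L 1)"
      using fourier_exp_1_image[OF L] by (auto intro!: continuous_intros)
    show "compact_space ?X" by (rule compact_space_subtopology) simp
    show "Hausdorff_space ?Y" by (rule Hausdorff_space_subtopology) simp
    show "fourier_exp L 1 ` topspace ?X = topspace ?Y" using fourier_exp_1_image[OF L] by simp
  qed
  obtain g where g: "continuous_map ?Y euclideanreal g"
    "\<And>x. x \<in> topspace ?X \<Longrightarrow> g (fourier_exp L 1 x) = w x"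
  proof (rule quotient_map_lift_exists[OF q])
    show "continuous_map ?X euclideanreal w" using wc by simp
    fix x y assume "x \<in> topspace ?X" "y \<in> topspace ?X" "fourier_exp L 1 x = fourier_exp L 1 y"
    then show "w x = w y" using fourier_exp_1_eq_imp[OF L, of x y] wL by auto
  qed blast
  show ?thesis by (rule that[of g]) (use g in auto)
qed

lemma continuous_square_integral_eq_0_imp_eq_0:
  fixes w :: "real \<Rightarrow> real"
  assumes L: "L > 0" and wc: "continuous_on {0..L} w"
    and int0: "(LINT x:{0..L}|lborel. (w x)^2) = 0" and x: "x \<in> {0..L}"
  shows "w x = 0"
proof -
  have w2i: "set_integrable lborel {0..L} (\<lambda>x. (w x)^2)"
    by (rule borel_integrable_atLeastAtMost') (intro continuous_intros wc)
  have "((\<lambda>x. (w x)^2) has_integral 0) (cbox 0 L)"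
    using set_borel_integral_eq_integral[OF w2i] int0 by (metis box_real(2) has_integral_integral)
  then have "(w x)^2 = 0"
    by (rule has_integral_0_cbox_imp_0[rotated 2]) (use L x wc in \<open>auto intro!: continuous_intros\<close>)
  then show ?thesis by simp
qed

lemma set_integral_mult_circle_polynomial_eq_0:
  fixes w :: "real \<Rightarrow> real" and P :: "complex \<Rightarrow> real"
  assumes wc: "continuous_on {0..L} w"
    and coef: "\<And>k. (LINT x:{0..L}|lborel. of_real (w x) * fourier_exp L k x) = 0"
    and P: "real_polynomial_function P"
  shows "(LINT x:{0..L}|lborel. w x * P (fourier_exp L 1 x)) = 0"
proof -
  obtain xs where xs: "\<And>x. complex_of_real (P (fourier_exp L 1 x)) = trig_poly L xs x"
    using real_polynomial_function_on_circle_eq_trig_poly[OF P] by blast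
  have "complex_of_real (LINT x:{0..L}|lborel. w x * P (fourier_exp L 1 x))
      = (LINT x:{0..L}|lborel. complex_of_real (w x * P (fourier_exp L 1 x)))"
    by (rule set_integral_complex_of_real[symmetric])
  also have "\<dots> = (LINT x:{0..L}|lborel. of_real (w x) * trig_poly L xs x)"
    by (simp add: xs[symmetric])
  also have "\<dots> = 0"
    by (rule set_integral_mult_trig_poly_eq_0) (use wc coef in \<open>auto intro: continuous_intros\<close>)
  finally show ?thesis by simp
qed

lemma set_integral_square_le_circle_approx:
  fixes w :: "real \<Rightarrow> real" and P :: "complex \<Rightarrow> real"
  assumes L: "L > 0" and wc: "continuous_on {0..L} w"
    and coef: "\<And>k. (LINT x:{0..L}|lborel. of_real (w x) * fourier_exp L k x) = 0"
    and Mw: "\<And>x. x \<in> {0..L} \<Longrightarrow> \<bar>w x\<bar> \<le> Mw"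
    and P: "real_polynomial_function P"
    and approx: "\<And>x. x \<in> {0..L} \<Longrightarrow> \<bar>w x - P (fourier_exp L 1 x)\<bar> \<le> e"
  shows "(LINT x:{0..L}|lborel. (w x)^2) \<le> Mw * e * L"
proof -
  have "continuous_on UNIV P"
    using continuous_real_polymonial_function[OF P] continuous_at_imp_continuous_on by blast
  then have PEc: "continuous_on {0..L} (\<lambda>x. P (fourier_exp L 1 x))"
    by (rule continuous_on_compose2[OF _ continuous_on_fourier_exp]) auto
  have i1: "set_integrable lborel {0..L} (\<lambda>x. w x * (w x - P (fourier_exp L 1 x)))"
    and i2: "set_integrable lborel {0..L} (\<lambda>x. w x * P (fourier_exp L 1 x))"
    by (rule borel_integrable_atLeastAtMost', intro continuous_intros wc PEc)+
  have "(LINT x:{0..L}|lborel. (w x)^2)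
      = (LINT x:{0..L}|lborel. w x * (w x - P (fourier_exp L 1 x)) + w x * P (fourier_exp L 1 x))"
    by (simp add: power2_eq_square algebra_simps)
  also have "\<dots> = (LINT x:{0..L}|lborel. w x * (w x - P (fourier_exp L 1 x)))"
    using set_integral_add(2)[OF i1 i2] set_integral_mult_circle_polynomial_eq_0[OF wc coef P] by simp
  also have "\<dots> \<le> (LINT x:{0..L}|lborel. Mw * e)"
  proof (rule set_integral_mono[OF i1])
    show "set_integrable lborel {0..L} (\<lambda>x. Mw * e)"
      by (rule borel_integrable_atLeastAtMost') (intro continuous_intros)
    fix x assume x: "x \<in> {0..L}"
    have "\<bar>w x\<bar> * \<bar>w x - P (fourier_exp L 1 x)\<bar> \<le> Mw * e"
      using Mw[OF x] approx[OF x] by (intro mult_mono) auto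
    then show "w x * (w x - P (fourier_exp L 1 x)) \<le> Mw * e"
      by (simp add: abs_mult[symmetric])
  qed
  also have "\<dots> = Mw * e * L" using L by (simp add: set_integral_const)
  finally show ?thesis .
qed

text \<open>By Stone--Weierstrass on the circle, \<open>w\<close> is a uniform limit of trigonometric polynomials, all
  orthogonal to \<open>w\<close>; hence \<open>\<integral> w\<^sup>2 = 0\<close>.\<close>

lemma fourier_coeff_eq_0_imp_eq_0_real:
  fixes w :: "real \<Rightarrow> real"
  assumes L: "L > 0" and wc: "continuous_on {0..L} w" and wL: "w L = w 0"
    and coef: "\<And>k. fourier_coeff L (\<lambda>x. of_real (w x)) k = 0"
    and x: "x \<in> {0..L}"
  shows "w x = 0"
proof -
  have coef': "(LINT x:{0..L}|lborel. of_real (w x) * fourier_exp L k x) = 0" for k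
    using coef[of k] L by (simp add: fourier_coeff_def)
  obtain F where Fc: "continuous_on (sphere 0 1) F"
    and Fw: "\<And>x. x \<in> {0..L} \<Longrightarrow> F (fourier_exp L 1 x) = w x"
    using continuous_on_circle_lift[OF L wc wL] by blast
  have "compact (w ` {0..L})" by (rule compact_continuous_image[OF wc]) simp
  then obtain Mw where Mw: "Mw > 0" "\<And>x. x \<in> {0..L} \<Longrightarrow> \<bar>w x\<bar> \<le> Mw"
    using compact_imp_bounded bounded_pos by (metis image_eqI real_norm_def)
  have "(LINT x:{0..L}|lborel. (w x)^2) \<le> 0"
  proof (rule field_le_epsilon)
    fix e :: real assume e: "e > 0"
    then have "e / (Mw * L) > 0" using Mw L by simp
    then obtain P where P: "real_polynomial_function P"
      "\<And>z. z \<in> sphere 0 1 \<Longrightarrow> \<bar>F z - P z\<bar> < e / (Mw * L)"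
      using Stone_Weierstrass_real_polynomial_function[OF compact_sphere Fc] by blast
    have "(LINT x:{0..L}|lborel. (w x)^2) \<le> Mw * (e / (Mw * L)) * L"
    proof (rule set_integral_square_le_circle_approx[OF L wc coef' Mw(2) P(1)])
      fix x assume "x \<in> {0..L}"
      then show "\<bar>w x - P (fourier_exp L 1 x)\<bar> \<le> e / (Mw * L)"
        using P(2)[of "fourier_exp L 1 x"] Fw by (simp add: fourier_exp_def)
    qed
    then show "(LINT x:{0..L}|lborel. (w x)^2) \<le> 0 + e" using Mw(1) L by simp
  qed
  moreover have "(LINT x:{0..L}|lborel. (w x)^2) \<ge> 0"
    unfolding set_lebesgue_integral_def by (rule integral_nonneg_AE) (auto simp: indicator_def)
  ultimately show ?thesis
    using continuous_square_integral_eq_0_imp_eq_0[OF L wc _ x] by simp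
qed

lemma fourier_coeff_eq_0_imp_eq_0:
  fixes u :: "real \<Rightarrow> complex"
  assumes L: "L > 0" and uc: "continuous_on {0..L} u" and uL: "u L = u 0"
    and coef: "\<And>k. fourier_coeff L u k = 0"
    and x: "x \<in> {0..L}"
  shows "u x = 0"
proof -
  have i: "set_integrable lborel {0..L} (\<lambda>x. u x * fourier_exp L k x)" for k
    by (rule borel_integrable_atLeastAtMost') (intro continuous_intros uc)
  have int_u: "(LINT x:{0..L}|lborel. u x * fourier_exp L k x) = 0" for k
    using coef[of k] L by (simp add: fourier_coeff_def)
  have int_cnj: "(LINT x:{0..L}|lborel. cnj (u x) * fourier_exp L k x) = 0" for k
    using set_integral_cnj[of lborel "{0..L}" "\<lambda>x. u x * fourier_exp L (- k) x"] int_u[of "- k"]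
    by (simp add: cnj_fourier_exp)
  have i_cnj: "set_integrable lborel {0..L} (\<lambda>x. cnj (u x) * fourier_exp L k x)" for k
    by (rule borel_integrable_atLeastAtMost') (intro continuous_intros uc)
  \<comment> \<open>\<open>Re\<close> and \<open>Im\<close> are linear combinations of the identity and \<open>cnj\<close>.\<close>
  have part_eq_0: "p (u x) = 0"
    if p: "\<And>z. complex_of_real (p z) = \<alpha> * z + \<beta> * cnj z" and pc: "continuous_on UNIV p" for p \<alpha> \<beta>
  proof (rule fourier_coeff_eq_0_imp_eq_0_real[OF L _ _ _ x])
    show "continuous_on {0..L} (\<lambda>x. p (u x))"
      by (rule continuous_on_compose2[OF pc uc]) auto
    show "p (u L) = p (u 0)" using uL by simp
    fix k
    have "(LINT x:{0..L}|lborel. of_real (p (u x)) * fourier_exp L k x)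
        = (LINT x:{0..L}|lborel. \<alpha> * (u x * fourier_exp L k x) + \<beta> * (cnj (u x) * fourier_exp L k x))"
      by (simp add: p algebra_simps)
    also have "\<dots> = 0"
      using set_integral_add(2)[OF set_integrable_mult_right[OF i] set_integrable_mult_right[OF i_cnj]]
        int_u int_cnj by simp
    finally show "fourier_coeff L (\<lambda>x. of_real (p (u x))) k = 0" by (simp add: fourier_coeff_def)
  qed
  have "Re (u x) = 0"
    by (rule part_eq_0[of Re "1/2" "1/2"]) (auto simp: complex_eq_iff intro: continuous_intros)
  moreover have "Im (u x) = 0"
    by (rule part_eq_0[of Im "1/(2*\<i>)" "- 1/(2*\<i>)"]) (auto simp: complex_eq_iff intro: continuous_intros)
  ultimately show ?thesis by (simp add: complex_eq_iff)
qed

section \<open>Convergence of Fourier series\<close>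

lemma continuous_on_fourier_series:
  fixes d :: "int \<Rightarrow> complex"
  assumes ds: "(\<lambda>m. norm (d m)) summable_on UNIV"
  shows "continuous_on S (\<lambda>y. \<Sum>\<^sub>\<infinity>m. d m * fourier_exp L (- m) y)"
proof (rule uniform_limit_theorem[where F="finite_subsets_at_top UNIV"])
  show "uniform_limit S (\<lambda>F y. \<Sum>m\<in>F. d m * fourier_exp L (- m) y)
      (\<lambda>y. \<Sum>\<^sub>\<infinity>m. d m * fourier_exp L (- m) y) (finite_subsets_at_top UNIV)"
    by (rule uniform_limit_weighted_series[OF ds]) simp
qed (auto intro!: always_eventually continuous_intros)

lemma fourier_coeff_fourier_series:
  fixes d :: "int \<Rightarrow> complex"
  assumes L: "L > 0" and ds: "(\<lambda>m. norm (d m)) summable_on UNIV"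
  shows "fourier_coeff L (\<lambda>y. \<Sum>\<^sub>\<infinity>m. d m * fourier_exp L (- m) y) k = d k"
proof -
  define g where "g y = (\<Sum>\<^sub>\<infinity>m. d m * fourier_exp L (- m) y)" for y
  define f where "f y = indicator {0..L} y *\<^sub>R fourier_exp L k y" for y
  have fi: "integrable lborel f"
    using borel_integrable_atLeastAtMost'[OF continuous_on_fourier_exp[of "{0..L}" L k]]
    unfolding set_integrable_def f_def .
  have gm: "g \<in> borel_measurable lborel"
    unfolding g_def using continuous_on_fourier_series[OF ds]
    by (simp add: borel_measurable_continuous_onI measurable_lborel1)
  have "((\<lambda>m. d m * fourier_exp L (- m) y) has_sum g y) UNIV" for y
    unfolding g_def
    by (rule summable_on_weighted_series[of d "\<lambda>m. fourier_exp L (- m)", OF ds, THEN has_sum_infsum]) simp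
  then have "((\<lambda>m. LINT y|lborel. f y * (d m * fourier_exp L (- m) y)) has_sum (LINT y|lborel. f y * g y)) UNIV"
    by (intro has_sum_integral_swap[where X=UNIV, OF ds _ _ fi _ _ gm]) auto
  \<comment> \<open>By orthogonality only the term \<open>m = k\<close> survives.\<close>
  moreover have "(LINT y|lborel. f y * (d m * fourier_exp L (- m) y)) = (if m = k then of_real L * d k else 0)" for m
  proof -
    have "(LINT y|lborel. f y * (d m * fourier_exp L (- m) y)) = d m * (LINT y:{0..L}|lborel. fourier_exp L (k - m) y)"
      unfolding set_lebesgue_integral_def f_def
      by (simp add: fourier_exp_mult algebra_simps flip: integral_mult_right_zero)
    then show ?thesis using set_integral_fourier_exp[OF L, of "k - m"] by auto
  qed
  ultimately have "((\<lambda>m. if m = k then of_real L * d k else 0) has_sum (LINT y|lborel. f y * g y)) UNIV"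
    by simp
  moreover have "((\<lambda>m. if m = k then of_real L * d k else 0) has_sum (of_real L * d k)) UNIV"
    by (rule has_sum_finite_neutralI[of "{k}"]) auto
  ultimately have "(LINT y|lborel. f y * g y) = of_real L * d k"
    using has_sum_unique by blast
  moreover have "(LINT y|lborel. f y * g y) = (LINT y:{0..L}|lborel. g y * fourier_exp L k y)"
    unfolding set_lebesgue_integral_def f_def by (simp add: mult.commute)
  ultimately show ?thesis using L by (simp add: fourier_coeff_def g_def[symmetric])
qed

lemma fourier_series_has_sum:
  fixes h :: "real \<Rightarrow> complex"
  assumes L: "L > 0" and hc: "continuous_on {0..L} h" and hL: "h L = h 0"
    and ds: "(\<lambda>k. norm (fourier_coeff L h k)) summable_on UNIV"
    and x: "x \<in> {0..L}"
  shows "((\<lambda>k. fourier_coeff L h k * fourier_exp L (- k) x) has_sum h x) UNIV"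
proof -
  define g where "g y = (\<Sum>\<^sub>\<infinity>k. fourier_coeff L h k * fourier_exp L (- k) y)" for y
  have gc: "continuous_on {0..L} g"
    unfolding g_def by (rule continuous_on_fourier_series[OF ds])
  have "g x - h x = 0"
  proof (rule fourier_coeff_eq_0_imp_eq_0[OF L _ _ _ x])
    show "continuous_on {0..L} (\<lambda>x. g x - h x)" by (intro continuous_intros gc hc)
    show "g L - h L = g 0 - h 0" using hL L by (simp add: g_def)
    fix k
    have "set_integrable lborel {0..L} (\<lambda>x. g x * fourier_exp L k x)"
      and "set_integrable lborel {0..L} (\<lambda>x. h x * fourier_exp L k x)"
      by (rule borel_integrable_atLeastAtMost', intro continuous_intros gc hc)+
    then have "fourier_coeff L (\<lambda>x. g x - h x) k = fourier_coeff L g k - fourier_coeff L h k"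
      by (simp add: fourier_coeff_def left_diff_distrib set_integral_diff diff_divide_distrib)
    then show "fourier_coeff L (\<lambda>x. g x - h x) k = 0"
      unfolding g_def using fourier_coeff_fourier_series[OF L ds] by simp
  qed
  moreover have "((\<lambda>k. fourier_coeff L h k * fourier_exp L (- k) x) has_sum g x) UNIV"
    unfolding g_def
    by (rule has_sum_infsum[OF summable_on_weighted_series(2)[of _ "\<lambda>k. fourier_exp L (- k)", OF ds]]) simp
  ultimately show ?thesis by simp
qed

lemma fourier_pairing_has_sum:
  fixes h g :: "real \<Rightarrow> complex"
  assumes L: "L > 0" and hc: "continuous_on {0..L} h" and hL: "h L = h 0"
    and ds: "(\<lambda>k. norm (fourier_coeff L h k)) summable_on UNIV"
    and gi: "integrable lborel g" and g0: "\<And>x. x \<notin> {0..L} \<Longrightarrow> g x = 0"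
  shows "((\<lambda>k. fourier_coeff L h k * (LINT x|lborel. g x * fourier_exp L (- k) x))
           has_sum (LINT x|lborel. g x * h x)) UNIV"
proof -
  define G where "G x = indicator {0..L} x *\<^sub>R h x" for x
  have "(\<lambda>x. indicator {0..L} x *\<^sub>R h x) \<in> borel_measurable borel"
    by (rule borel_measurable_continuous_on_indicator[OF _ hc]) simp
  then have Gm: "G \<in> borel_measurable lborel" unfolding G_def by simp
  have "((\<lambda>k. LINT x|lborel. g x * (fourier_coeff L h k * fourier_exp L (- k) x))
      has_sum (LINT x|lborel. g x * G x)) UNIV"
  proof (rule has_sum_integral_swap[OF ds _ _ gi g0 _ Gm])
    show "((\<lambda>k. fourier_coeff L h k * fourier_exp L (- k) x) has_sum G x) UNIV" if "x \<in> {0..L}" for x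
      using fourier_series_has_sum[OF L hc hL ds that] that by (simp add: G_def)
  qed auto
  moreover have "(LINT x|lborel. g x * G x) = (LINT x|lborel. g x * h x)"
    by (rule Bochner_Integration.integral_cong) (auto simp: G_def g0 split: split_indicator)
  ultimately show ?thesis
    by (simp add: mult.left_commute[of "g _"] flip: integral_mult_right_zero)
qed

section \<open>Test functions\<close>

lemma
  fixes \<phi> :: "real \<Rightarrow> real"
  assumes tf: "test_fun U \<phi>"
  shows test_fun_has_real_derivative: "(\<phi> has_real_derivative deriv \<phi> x) (at x)"
    and test_fun_deriv_has_real_derivative: "(deriv \<phi> has_real_derivative deriv (deriv \<phi>) x) (at x)"
    and test_fun_continuous_on_deriv2: "continuous_on S (deriv (deriv \<phi>))"
    and test_fun_eq_0: "x \<notin> U \<Longrightarrow> \<phi> x = 0"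
    and test_fun_deriv_eq_0: "x \<notin> U \<Longrightarrow> deriv \<phi> x = 0"
proof -
  have D: "\<And>n x. ((deriv ^^ n) \<phi>) differentiable (at x)"
    and S: "closure {x. \<phi> x \<noteq> 0} \<subseteq> U"
    using tf unfolding test_fun_def by auto
  show d1: "(\<phi> has_real_derivative deriv \<phi> x) (at x)" for x
    using D[of 0 x] by (simp add: DERIV_deriv_iff_real_differentiable)
  show "(deriv \<phi> has_real_derivative deriv (deriv \<phi>) x) (at x)"
    using D[of 1 x] by (simp add: DERIV_deriv_iff_real_differentiable)
  have "deriv (deriv \<phi>) differentiable_on S"
    using D[of 2] by (auto simp: differentiable_on_def numeral_2_eq_2 intro: differentiable_at_withinI)
  then show "continuous_on S (deriv (deriv \<phi>))"
    by (rule differentiable_imp_continuous_on)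
  define V where "V = - closure {x. \<phi> x \<noteq> 0}"
  have V0: "\<phi> y = 0" if "y \<in> V" for y
    using that closure_subset[of "{x. \<phi> x \<noteq> 0}"] unfolding V_def by auto
  assume x: "x \<notin> U"
  then have V: "open V" "x \<in> V" using S by (auto simp: V_def)
  then show "\<phi> x = 0" using V0 by blast
  have "((\<lambda>_. 0) has_real_derivative deriv \<phi> x) (at x)"
    by (rule has_field_derivative_transform_within_open[OF d1 V]) (rule V0)
  then show "deriv \<phi> x = 0" using DERIV_unique DERIV_const by blast
qed

lemma test_fun_continuous_on:
  assumes "test_fun U \<phi>"
  shows "continuous_on S \<phi>"
  using test_fun_has_real_derivative[OF assms]
  by (meson DERIV_continuous continuous_at_imp_continuous_on)

lemma test_fun_measurable:
  assumes "test_fun U \<phi>"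
  shows "\<phi> \<in> borel_measurable lborel"
  using test_fun_continuous_on[OF assms]
  by (simp add: borel_measurable_continuous_onI measurable_lborel1)

lemma test_fun_bounded:
  assumes tf: "test_fun U \<phi>"
  obtains M where "\<And>x. \<bar>\<phi> x\<bar> \<le> M"
proof -
  have "compact (closure {x. \<phi> x \<noteq> 0})" using tf by (simp add: test_fun_def)
  then have "compact (\<phi> ` closure {x. \<phi> x \<noteq> 0})"
    by (rule compact_continuous_image[OF test_fun_continuous_on[OF tf]])
  then obtain M where M: "M > 0" "\<And>y. y \<in> \<phi> ` closure {x. \<phi> x \<noteq> 0} \<Longrightarrow> norm y \<le> M"
    using compact_imp_bounded bounded_pos by metis
  show ?thesis
  proof (rule that)
    fix x show "\<bar>\<phi> x\<bar> \<le> M"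
      using M closure_subset[of "{x. \<phi> x \<noteq> 0}"] by (cases "\<phi> x = 0") auto
  qed
qed

lemma has_vector_derivative_modulated:
  fixes p :: "real \<Rightarrow> real"
  assumes "(p has_real_derivative p') (at x)"
  shows "((\<lambda>x. of_real (p x) * cis (w * x)) has_vector_derivative
          (of_real p' * cis (w * x) + \<i> * of_real w * (of_real (p x) * cis (w * x)))) (at x)"
proof -
  have "of_real (p x) * (\<i> * of_real w * cis (w * x)) + of_real p' * cis (w * x)
      = of_real p' * cis (w * x) + \<i> * of_real w * (of_real (p x) * cis (w * x))"
    by (simp add: algebra_simps)
  then show ?thesis
    using has_vector_derivative_mult[OF has_vector_derivative_of_real[OF assms]
        has_vector_derivative_cis_linear] by metis
qed

text \<open>A test function is smooth and vanishes to first order at both ends of \<open>[0, L]\<close>, so after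
  modulation it is a \<open>C\<^sup>2\<close> periodic function whose Fourier coefficients decay quadratically.\<close>

lemma fourier_coeff_modulated_test_fun_abs_summable:
  fixes \<phi> :: "real \<Rightarrow> real"
  assumes tf: "test_fun {0<..<L} \<phi>" and L: "L > 0"
  shows "(\<lambda>k. norm (fourier_coeff L (\<lambda>x. of_real (\<phi> x) * cis (\<omega> * x)) k)) summable_on UNIV"
proof -
  define P where "P p x = complex_of_real (p x) * cis (\<omega> * x)" for p :: "real \<Rightarrow> real" and x
  define h1 where "h1 x = P (deriv \<phi>) x + \<i> * of_real \<omega> * P \<phi> x" for x
  define h2 where "h2 x = (P (deriv (deriv \<phi>)) x + \<i> * of_real \<omega> * P (deriv \<phi>) x)
      + \<i> * of_real \<omega> * h1 x" for x
  note d1 = test_fun_has_real_derivative[OF tf]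
    and d2 = test_fun_deriv_has_real_derivative[OF tf]
  have cP: "continuous_on S (P p)" if "continuous_on UNIV p" for p S
    unfolding P_def by (intro continuous_intros continuous_on_subset[OF that]) auto
  have hd: "(P \<phi> has_vector_derivative h1 x) (at x)" for x
    unfolding P_def h1_def by (rule has_vector_derivative_modulated[OF d1])
  have h1d: "(h1 has_vector_derivative h2 x) (at x)" for x
    unfolding h1_def h2_def P_def
    by (intro has_vector_derivative_add has_vector_derivative_mult_right
        has_vector_derivative_modulated d1 d2)
  have h2c: "continuous_on {0..L} h2"
    unfolding h2_def h1_def
    by (intro continuous_intros cP test_fun_continuous_on_deriv2[OF tf] test_fun_continuous_on[OF tf]
        DERIV_continuous[OF d2, THEN continuous_at_imp_continuous_on[rule_format]] ballI)
  have ends: "0 \<notin> {0<..<L}" "L \<notin> {0<..<L}" by auto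
  show ?thesis
    using fourier_coeff_abs_summable[OF L hd h1d h2c]
      test_fun_eq_0[OF tf ends(1)] test_fun_eq_0[OF tf ends(2)]
      test_fun_deriv_eq_0[OF tf ends(1)] test_fun_deriv_eq_0[OF tf ends(2)]
    by (simp add: P_def[abs_def] h1_def)
qed

section \<open>The cells of the scattering function\<close>

lemma periodic_add_mult:
  fixes c :: "int \<Rightarrow> 'a"
  assumes per: "\<And>k. c (k + int J) = c k"
  shows "c (k + m * int J) = c k"
proof -
  have pos: "c (k + int n * int J) = c k" for n k
  proof (induction n arbitrary: k)
    case (Suc n)
    have "c (k + int (Suc n) * int J) = c ((k + int n * int J) + int J)" by (simp add: algebra_simps)
    then show ?case using per Suc by simp
  qed simp
  show ?thesis
  proof (cases "m \<ge> 0")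
    case True then show ?thesis using pos[of k "nat m"] by simp
  next
    case False
    then show ?thesis using pos[of "k + m * int J" "nat (- m)"] by (simp add: algebra_simps)
  qed
qed

lemma shift_eq_imp_int_eq:
  fixes T x y :: real and a a' :: int
  assumes T: "T > 0" and x: "0 \<le> x" "x < T" and y: "0 \<le> y" "y < T"
    and e: "x + of_int a * T = y + of_int a' * T"
  shows "a = a'"
proof -
  have "of_int (a - a') * T = y - x" using e by (simp add: algebra_simps)
  then have "\<bar>of_int (a - a') :: real\<bar> * T = \<bar>y - x\<bar>"
    using T by (metis abs_mult abs_of_pos)
  also have "\<dots> < 1 * T" using x y by linarith
  finally have "\<bar>of_int (a - a') :: real\<bar> < 1" using T by (simp only: mult_less_cancel_right)
  then show ?thesis by linarith
qed

lemma Cj_translate: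
  "Cj C a b T B j (t - of_int (a j) * T) (\<gamma> - of_int (b j) * B)
     = indicator (rect T B) (t - of_int (a j) * T, \<gamma> - of_int (b j) * B) * C t \<gamma>"
  by (simp add: Cj_def)

lemma rect_translates_disjoint:
  assumes T: "T > 0" and B: "B > 0" and distinct: "inj_on (\<lambda>j. (a j, b j)) {1..J}"
    and j: "j \<in> {1..J}" and j': "j' \<in> {1..J}"
    and mem: "(t - of_int (a j) * T, \<gamma> - of_int (b j) * B) \<in> rect T B"
    and mem': "(t - of_int (a j') * T, \<gamma> - of_int (b j') * B) \<in> rect T B"
  shows "j = j'"
proof -
  have "a j = a j'"
    by (rule shift_eq_imp_int_eq[OF T, where x="t - of_int (a j) * T" and y="t - of_int (a j') * T"])
      (use mem mem' in \<open>auto simp: rect_def\<close>)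
  moreover have "b j = b j'"
    by (rule shift_eq_imp_int_eq[OF B, where x="\<gamma> - of_int (b j) * B" and y="\<gamma> - of_int (b j') * B"])
      (use mem mem' in \<open>auto simp: rect_def\<close>)
  ultimately show ?thesis using inj_onD[OF distinct _ j j'] by simp
qed

lemma scattering_eq_sum_Cj:
  fixes C :: "real \<Rightarrow> real \<Rightarrow> real" and a b :: "nat \<Rightarrow> int"
  assumes T: "T > 0" and B: "B > 0"
    and supp: "{(t, \<gamma>). C t \<gamma> \<noteq> 0} \<subseteq>
               (\<Union>j\<in>{1..J}. (\<lambda>(x, y). (x + of_int (a j) * T, y + of_int (b j) * B)) ` rect T B)"
    and distinct: "inj_on (\<lambda>j. (a j, b j)) {1..J}"
  shows "C t \<gamma> = (\<Sum>j=1..J. Cj C a b T B j (t - of_int (a j) * T) (\<gamma> - of_int (b j) * B))"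
proof (cases "C t \<gamma> = 0")
  case False
  then have "(t, \<gamma>) \<in> (\<Union>j\<in>{1..J}. (\<lambda>(x, y). (x + of_int (a j) * T, y + of_int (b j) * B)) ` rect T B)"
    using supp by blast
  then obtain j0 x y where j0: "j0 \<in> {1..J}" and xy: "(x, y) \<in> rect T B"
    and txy: "(t, \<gamma>) = (x + of_int (a j0) * T, y + of_int (b j0) * B)"
    by (auto elim!: UN_E imageE)
  then have mem0: "(t - of_int (a j0) * T, \<gamma> - of_int (b j0) * B) \<in> rect T B"
    by simp
  have "indicator (rect T B) (t - of_int (a j) * T, \<gamma> - of_int (b j) * B) = (if j = j0 then 1 else 0 :: real)"
    if j: "j \<in> {1..J}" for j
  proof (cases "(t - of_int (a j) * T, \<gamma> - of_int (b j) * B) \<in> rect T B")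
    case True
    then show ?thesis using rect_translates_disjoint[OF T B distinct j j0 True mem0] by simp
  qed (use mem0 in auto)
  then have "(\<Sum>j=1..J. Cj C a b T B j (t - of_int (a j) * T) (\<gamma> - of_int (b j) * B))
      = (\<Sum>j=1..J. if j = j0 then C t \<gamma> else 0)"
    by (intro sum.cong) (simp_all add: Cj_translate)
  also have "\<dots> = C t \<gamma>" using j0 by simp
  finally show ?thesis ..
qed (simp add: Cj_def)

lemma scattering_shift_eq_sum_Cj:
  fixes C :: "real \<Rightarrow> real \<Rightarrow> real" and a b :: "nat \<Rightarrow> int"
  assumes T: "T > 0" and B: "B > 0"
    and supp: "{(t, \<gamma>). C t \<gamma> \<noteq> 0} \<subseteq>
               (\<Union>j\<in>{1..J}. (\<lambda>(x, y). (x + of_int (a j) * T, y + of_int (b j) * B)) ` rect T B)"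
    and distinct: "inj_on (\<lambda>j. (a j, b j)) {1..J}"
    and t: "0 \<le> t" "t < T"
  shows "C (t + of_int a0 * T) \<gamma> =
      (\<Sum>j\<in>{j\<in>{1..J}. a j = a0}. Cj C a b T B j t (\<gamma> - of_int (b j) * B))"
proof -
  have "Cj C a b T B j (t + of_int a0 * T - of_int (a j) * T) (\<gamma> - of_int (b j) * B)
      = (if a j = a0 then Cj C a b T B j t (\<gamma> - of_int (b j) * B) else 0)" for j
  proof (cases "0 \<le> t + of_int a0 * T - of_int (a j) * T \<and> t + of_int a0 * T - of_int (a j) * T < T")
    case True
    then have "a j = a0"
      by (intro shift_eq_imp_int_eq[OF T _ _ t, where x="t + of_int a0 * T - of_int (a j) * T"]) auto
    then show ?thesis by simp
  qed (auto simp: Cj_def rect_def)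
  then show ?thesis
    unfolding sum.inter_filter[OF finite_atLeastAtMost]
    using scattering_eq_sum_Cj[OF T B supp distinct, of "t + of_int a0 * T" \<gamma>] by simp
qed

lemma cis_linear_measurable [measurable]: "(\<lambda>x. cis (w * x)) \<in> borel_measurable lborel"
  by (simp add: borel_measurable_continuous_onI continuous_on_cis continuous_on_mult_left
      continuous_on_id measurable_lborel1)

lemma integral_cis_mult_shift:
  fixes f :: "real \<Rightarrow> complex"
  shows "(LINT x|lborel. cis (w * x) * f (x - s)) = cis (w * s) * (LINT x|lborel. cis (w * x) * f x)"
proof -
  have "(LINT x|lborel. cis (w * x) * f (x - s))
      = \<bar>1\<bar> *\<^sub>R (LINT x|lborel. cis (w * (s + 1 * x)) * f ((s + 1 * x) - s))"
    by (rule lborel_integral_real_affine) simp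
  also have "\<dots> = (LINT x|lborel. cis (w * s) * (cis (w * x) * f x))"
    by (simp add: distrib_left cis_mult[symmetric] mult_ac)
  finally show ?thesis by simp
qed

lemma Cj_integrable:
  fixes C :: "real \<Rightarrow> real \<Rightarrow> real"
  assumes C_int: "\<forall>t. integrable lborel (\<lambda>\<gamma>. C t \<gamma>)"
  shows "integrable lborel (\<lambda>\<gamma>. Cj C a b T B j t \<gamma>)"
proof -
  have "integrable lborel (\<lambda>\<gamma>. C (t + of_int (a j) * T) (of_int (b j) * B + 1 * \<gamma>))"
    by (rule lborel_integrable_real_affine) (use C_int in auto)
  then have "integrable lborel (\<lambda>\<gamma>. indicator {0..<T} t *
      (indicator {0..<B} \<gamma> *\<^sub>R C (t + of_int (a j) * T) (of_int (b j) * B + 1 * \<gamma>)))"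
    by (intro integrable_mult_right integrable_mult_indicator) simp_all
  moreover have "(\<lambda>\<gamma>. Cj C a b T B j t \<gamma>) = (\<lambda>\<gamma>. indicator {0..<T} t *
      (indicator {0..<B} \<gamma> *\<^sub>R C (t + of_int (a j) * T) (of_int (b j) * B + 1 * \<gamma>)))"
    by (auto simp: Cj_def rect_def indicator_def add.commute)
  ultimately show ?thesis by simp
qed

lemma Cj_eq_0_outside: "\<gamma> \<notin> {0..B} \<Longrightarrow> Cj C a b T B j t \<gamma> = 0"
  by (auto simp: Cj_def rect_def indicator_def)

lemma Ph_shift_eq_sum:
  fixes C :: "real \<Rightarrow> real \<Rightarrow> real" and a b :: "nat \<Rightarrow> int"
  assumes T: "T > 0" and B: "B > 0"
    and C_int: "\<forall>t. integrable lborel (\<lambda>\<gamma>. C t \<gamma>)"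
    and supp: "{(t, \<gamma>). C t \<gamma> \<noteq> 0} \<subseteq>
               (\<Union>j\<in>{1..J}. (\<lambda>(x, y). (x + of_int (a j) * T, y + of_int (b j) * B)) ` rect T B)"
    and distinct: "inj_on (\<lambda>j. (a j, b j)) {1..J}"
    and t: "0 \<le> t" "t < T"
  shows "Ph C \<tau> (t + of_int a0 * T) =
    (\<Sum>j\<in>{j\<in>{1..J}. a j = a0}. cis ((- 2 * pi * \<tau>) * (of_int (b j) * B)) *
        (LINT \<gamma>|lborel. cis ((- 2 * pi * \<tau>) * \<gamma>) * of_real (Cj C a b T B j t \<gamma>)))"
proof -
  define w where "w = - 2 * pi * \<tau>"
  have "Ph C \<tau> (t + of_int a0 * T) = (LINT \<gamma>|lborel. cis (w * \<gamma>) * of_real (C (t + of_int a0 * T) \<gamma>))"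
    unfolding Ph_def w_def by (simp add: mult_ac)
  also have "\<dots> = (LINT \<gamma>|lborel. (\<Sum>j\<in>{j\<in>{1..J}. a j = a0}.
        cis (w * \<gamma>) * of_real (Cj C a b T B j t (\<gamma> - of_int (b j) * B))))"
    by (simp add: scattering_shift_eq_sum_Cj[OF T B supp distinct t] sum_distrib_left)
  also have "\<dots> = (\<Sum>j\<in>{j\<in>{1..J}. a j = a0}.
        LINT \<gamma>|lborel. cis (w * \<gamma>) * of_real (Cj C a b T B j t (\<gamma> - of_int (b j) * B)))"
  proof (rule Bochner_Integration.integral_sum)
    fix j
    have "integrable lborel (\<lambda>\<gamma>. complex_of_real (Cj C a b T B j t (- (of_int (b j) * B) + 1 * \<gamma>)))"
      by (rule lborel_integrable_real_affine) (simp_all add: Cj_integrable[OF C_int])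
    then show "integrable lborel (\<lambda>\<gamma>. cis (w * \<gamma>) * of_real (Cj C a b T B j t (\<gamma> - of_int (b j) * B)))"
      by (intro integrable_bounded_mult[where K=1]) simp_all
  qed
  also have "\<dots> = (\<Sum>j\<in>{j\<in>{1..J}. a j = a0}. cis (w * (of_int (b j) * B)) *
        (LINT \<gamma>|lborel. cis (w * \<gamma>) * of_real (Cj C a b T B j t \<gamma>)))"
    by (simp only: integral_cis_mult_shift[where f="\<lambda>\<gamma>. of_real (Cj C a b T B _ t \<gamma>)"])
  finally show ?thesis unfolding w_def .
qed

lemma cis_lattice_phase:
  assumes JBT: "real J * B * T = 1"
  shows "cis ((- 2 * pi * (of_int (m * int J + int r) * T)) * (of_int bj * B))
       = cis (- 2 * pi * of_nat r * of_int bj / of_nat J)"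
proof -
  have J: "J > 0" using JBT by (cases J) auto
  have TB: "T * B = 1 / real J" using JBT J by (simp add: field_simps)
  have "(- 2 * pi * (of_int (m * int J + int r) * T)) * (of_int bj * B)
      = - 2 * pi * (of_int (m * int J + int r) * of_int bj) * (T * B)" by (simp add: mult_ac)
  also have "\<dots> = - 2 * pi * of_nat r * of_int bj / of_nat J + 2 * pi * of_int (- m * bj)"
    unfolding TB using J by (simp add: field_simps)
  finally have "(- 2 * pi * (of_int (m * int J + int r) * T)) * (of_int bj * B)
      = - 2 * pi * of_nat r * of_int bj / of_nat J + 2 * pi * of_int (- m * bj)" .
  moreover have "cis (2 * pi * real_of_int (- m * bj)) = 1" by (rule cis_multiple_2pi) simp
  ultimately show ?thesis by (simp only: cis_mult[symmetric]) simp
qed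

lemma infsum_sum_fibers:
  fixes V :: "'j \<Rightarrow> 'a::{topological_comm_monoid_add, t2_space}"
  assumes "finite S"
  shows "(\<Sum>\<^sub>\<infinity>k. \<Sum>j\<in>{j\<in>S. g j = k}. V j) = (\<Sum>j\<in>S. V j)"
proof (rule infsumI, rule has_sum_finite_neutralI[of "g ` S"])
  show "(\<Sum>j\<in>S. V j) = (\<Sum>k\<in>g ` S. \<Sum>j\<in>{j\<in>S. g j = k}. V j)"
    by (rule sum.image_gen[OF assms])
qed (use assms in \<open>auto intro!: sum.neutral\<close>)

lemma Pi_fun_eq_sum:
  fixes C :: "real \<Rightarrow> real \<Rightarrow> real" and a b :: "nat \<Rightarrow> int" and c :: "int \<Rightarrow> complex"
  assumes T: "T > 0" and B: "B > 0" and JBT: "real J * B * T = 1"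
    and C_int: "\<forall>t. integrable lborel (\<lambda>\<gamma>. C t \<gamma>)"
    and supp: "{(t, \<gamma>). C t \<gamma> \<noteq> 0} \<subseteq>
               (\<Union>j\<in>{1..J}. (\<lambda>(x, y). (x + of_int (a j) * T, y + of_int (b j) * B)) ` rect T B)"
    and distinct: "inj_on (\<lambda>j. (a j, b j)) {1..J}"
    and c_per: "\<forall>k. c (k + int J) = c k"
    and t: "0 \<le> t" "t < T"
  shows "Pi_fun C c T (m * int J + int r) t =
    (\<Sum>j=1..J. A_ent c a b J r j *
       (LINT \<gamma>|lborel. cis ((- 2 * pi * (of_int (m * int J + int r) * T)) * \<gamma>) * of_real (Cj C a b T B j t \<gamma>)))"
proof -
  define n where "n = m * int J + int r"
  define Z where "Z j = cis ((- 2 * pi * (of_int n * T)) * (of_int (b j) * B))" for j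
  define Q where "Q j = (LINT \<gamma>|lborel. cis ((- 2 * pi * (of_int n * T)) * \<gamma>) * of_real (Cj C a b T B j t \<gamma>))" for j
  define V where "V j = cnj (c (n - a j)) * c (- a j) * (Z j * Q j)" for j
  have kth_term: "cnj (c (k + n)) * c k * Ph C (of_int n * T) (t - of_int k * T)
      = (\<Sum>j\<in>{j\<in>{1..J}. - a j = k}. V j)" for k
  proof -
    have "{j\<in>{1..J}. a j = - k} = {j\<in>{1..J}. - a j = k}" by auto
    then have "Ph C (of_int n * T) (t - of_int k * T) = (\<Sum>j\<in>{j\<in>{1..J}. - a j = k}. Z j * Q j)"
      using Ph_shift_eq_sum[OF T B C_int supp distinct t, of "of_int n * T" "- k"]
      by (simp add: Z_def Q_def)
    then show ?thesis
      by (simp only: sum_distrib_left) (intro sum.cong, auto simp: V_def add.commute)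
  qed
  have "Pi_fun C c T n t = (\<Sum>j=1..J. V j)"
    unfolding Pi_fun_def kth_term by (rule infsum_sum_fibers) simp
  also have "\<dots> = (\<Sum>j=1..J. A_ent c a b J r j * Q j)"
  proof (rule sum.cong[OF refl])
    fix j
    have "c (n - a j) = c ((int r - a j) + m * int J)" by (simp add: n_def algebra_simps)
    then have "c (n - a j) = c (int r - a j)" using periodic_add_mult[of c, OF c_per[rule_format]] by simp
    moreover have "Z j = cis (- 2 * pi * of_nat r * of_int (b j) / of_nat J)"
      unfolding Z_def n_def by (rule cis_lattice_phase[OF JBT])
    ultimately show "V j = A_ent c a b J r j * Q j"
      unfolding V_def A_ent_def by (simp add: mult_ac)
  qed
  finally show ?thesis by (simp add: n_def Q_def)
qed

section \<open>The reconstruction identities\<close>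

lemma integrable_test_fun_mult_Cj:
  fixes C :: "real \<Rightarrow> real \<Rightarrow> real"
  assumes C_int: "\<forall>t. integrable lborel (\<lambda>\<gamma>. C t \<gamma>)" and tf: "test_fun U \<phi>"
  shows "integrable lborel (\<lambda>\<gamma>. of_real (\<phi> \<gamma>) * of_real (Cj C a b T B j t \<gamma>) :: complex)"
proof -
  obtain M where M: "\<And>x. \<bar>\<phi> x\<bar> \<le> M" using test_fun_bounded[OF tf] by blast
  show ?thesis
    using Cj_integrable[OF C_int] test_fun_measurable[OF tf] M
    by (intro integrable_bounded_mult[where K=M]) auto
qed

lemma integral_test_fun_mult_sum_Cj:
  fixes C :: "real \<Rightarrow> real \<Rightarrow> real" and A :: "nat \<Rightarrow> complex"
  assumes C_int: "\<forall>t. integrable lborel (\<lambda>\<gamma>. C t \<gamma>)" and tf: "test_fun U \<phi>"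
  shows "(LINT \<gamma>|lborel. of_real (\<phi> \<gamma>) * (\<Sum>j=1..J. A j * of_real (Cj C a b T B j t \<gamma>)))
      = (\<Sum>j=1..J. A j * (LINT \<gamma>|lborel. of_real (\<phi> \<gamma>) * of_real (Cj C a b T B j t \<gamma>)))"
proof -
  have "(LINT \<gamma>|lborel. of_real (\<phi> \<gamma>) * (\<Sum>j=1..J. A j * of_real (Cj C a b T B j t \<gamma>)))
      = (LINT \<gamma>|lborel. (\<Sum>j=1..J. A j * (of_real (\<phi> \<gamma>) * of_real (Cj C a b T B j t \<gamma>))))"
    by (simp add: sum_distrib_left mult_ac)
  also have "\<dots> = (\<Sum>j=1..J. LINT \<gamma>|lborel. A j * (of_real (\<phi> \<gamma>) * of_real (Cj C a b T B j t \<gamma>)))"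
    by (rule Bochner_Integration.integral_sum) (use integrable_test_fun_mult_Cj[OF C_int tf] in auto)
  finally show ?thesis by simp
qed

lemma lattice_phase_split:
  assumes JBT: "real J * B * T = 1" and B: "B > 0"
  shows "2 * pi * \<gamma> * T * of_int (m * int J + int r) = 2 * pi * real r * T * \<gamma> + 2 * pi * of_int m * \<gamma> / B"
proof -
  have TJ: "T * real J = 1 / B" using JBT B by (simp add: field_simps)
  have "2 * pi * \<gamma> * T * of_int (m * int J + int r)
      = 2 * pi * \<gamma> * of_int m * (T * real J) + 2 * pi * real r * T * \<gamma>"
    by (simp add: algebra_simps)
  then show ?thesis unfolding TJ by simp
qed

lemma integral_test_fun_cis_eq_fourier_coeff:
  fixes \<phi> :: "real \<Rightarrow> real"
  assumes JBT: "real J * B * T = 1" and B: "B > 0" and tf: "test_fun {0<..<B} \<phi>"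
  shows "(LINT \<gamma>|lborel. of_real (\<phi> \<gamma>) * cis (2 * pi * \<gamma> * T * of_int (m * int J + int r)))
      = of_real B * fourier_coeff B (\<lambda>\<gamma>. of_real (\<phi> \<gamma>) * cis (2 * pi * real r * T * \<gamma>)) m"
proof -
  have "(LINT \<gamma>|lborel. of_real (\<phi> \<gamma>) * cis (2 * pi * \<gamma> * T * of_int (m * int J + int r)))
      = (LINT \<gamma>:{0..B}|lborel. of_real (\<phi> \<gamma>) * cis (2 * pi * real r * T * \<gamma>) * fourier_exp B m \<gamma>)"
    unfolding set_lebesgue_integral_def
  proof (rule Bochner_Integration.integral_cong[OF refl])
    fix \<gamma>
    have "of_real (\<phi> \<gamma>) * cis (2 * pi * \<gamma> * T * of_int (m * int J + int r))
        = of_real (\<phi> \<gamma>) * cis (2 * pi * real r * T * \<gamma>) * fourier_exp B m \<gamma>"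
      unfolding lattice_phase_split[OF JBT B] by (simp add: fourier_exp_def cis_mult[symmetric] mult_ac)
    then show "of_real (\<phi> \<gamma>) * cis (2 * pi * \<gamma> * T * of_int (m * int J + int r))
        = indicator {0..B} \<gamma> *\<^sub>R (of_real (\<phi> \<gamma>) * cis (2 * pi * real r * T * \<gamma>) * fourier_exp B m \<gamma>)"
      using test_fun_eq_0[OF tf, of \<gamma>] by (auto split: split_indicator)
  qed
  then show ?thesis using B by (simp add: fourier_coeff_def)
qed

lemma Pi_fun_eq_sum_fourier_exp:
  fixes C :: "real \<Rightarrow> real \<Rightarrow> real" and a b :: "nat \<Rightarrow> int" and c :: "int \<Rightarrow> complex"
  assumes T: "T > 0" and B: "B > 0" and JBT: "real J * B * T = 1"
    and C_int: "\<forall>t. integrable lborel (\<lambda>\<gamma>. C t \<gamma>)"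
    and supp: "{(t, \<gamma>). C t \<gamma> \<noteq> 0} \<subseteq>
               (\<Union>j\<in>{1..J}. (\<lambda>(x, y). (x + of_int (a j) * T, y + of_int (b j) * B)) ` rect T B)"
    and distinct: "inj_on (\<lambda>j. (a j, b j)) {1..J}"
    and c_per: "\<forall>k. c (k + int J) = c k"
    and t: "0 \<le> t" "t < T"
  shows "Pi_fun C c T (m * int J + int r) t =
    (\<Sum>j=1..J. A_ent c a b J r j * (LINT \<gamma>|lborel.
       cis (- (2 * pi * real r * T) * \<gamma>) * of_real (Cj C a b T B j t \<gamma>) * fourier_exp B (- m) \<gamma>))"
proof -
  have "(- 2 * pi * (of_int (m * int J + int r) * T)) * \<gamma>
      = - (2 * pi * real r * T) * \<gamma> + 2 * pi * of_int (- m) * \<gamma> / B" for \<gamma>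
    using lattice_phase_split[OF JBT B, of \<gamma> m r] by (simp add: algebra_simps)
  then have integrand: "cis ((- 2 * pi * (of_int (m * int J + int r) * T)) * \<gamma>) * of_real (Cj C a b T B j t \<gamma>)
      = cis (- (2 * pi * real r * T) * \<gamma>) * of_real (Cj C a b T B j t \<gamma>) * fourier_exp B (- m) \<gamma>" for j \<gamma>
    unfolding fourier_exp_def by (simp only: cis_mult[symmetric]) (simp add: mult_ac)
  show ?thesis unfolding Pi_fun_eq_sum[OF T B JBT C_int supp distinct c_per t] integrand ..
qed

text \<open>The \<open>m\<close>-th term of the pairing of \<open>S\<^sub>r\<close> with \<open>\<phi>\<close> is \<open>\<Sum>\<^sub>j A\<^sub>r\<^sub>j\<close> times the \<open>m\<close>-th
  term of the Fourier pairing (period \<open>B = 1/(JT)\<close>) of \<open>h(\<gamma>) = \<phi>(\<gamma>) cis(2\<pi>rT\<gamma>)\<close> with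
  \<open>cis(-2\<pi>rT\<gamma>) C\<^sub>j(t,\<gamma>)\<close>; summing over \<open>m\<close> recovers \<open>\<integral> \<phi> C\<^sub>j(t,\<cdot>)\<close>.\<close>

lemma S_term_has_sum:
  fixes J :: nat and C :: "real \<Rightarrow> real \<Rightarrow> real" and a b :: "nat \<Rightarrow> int" and c :: "int \<Rightarrow> complex"
  assumes T: "T > 0" and B: "B > 0" and JBT: "real J * B * T = 1"
    and C_int: "\<forall>t. integrable lborel (\<lambda>\<gamma>. C t \<gamma>)"
    and supp: "{(t, \<gamma>). C t \<gamma> \<noteq> 0} \<subseteq>
               (\<Union>j\<in>{1..J}. (\<lambda>(x, y). (x + of_int (a j) * T, y + of_int (b j) * B)) ` rect T B)"
    and distinct: "inj_on (\<lambda>j. (a j, b j)) {1..J}"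
    and c_per: "\<forall>k. c (k + int J) = c k"
    and t: "0 \<le> t" "t < T" and tf: "test_fun {0<..<B} \<phi>"
  shows "(S_term C c J T B r t \<phi> has_sum
           (\<Sum>j=1..J. A_ent c a b J r j * (LINT \<gamma>|lborel. of_real (\<phi> \<gamma>) * of_real (Cj C a b T B j t \<gamma>))))
           UNIV"
proof -
  define \<omega> where "\<omega> = 2 * pi * real r * T"
  define h where "h \<gamma> = complex_of_real (\<phi> \<gamma>) * cis (\<omega> * \<gamma>)" for \<gamma>
  define f where "f j \<gamma> = cis (- \<omega> * \<gamma>) * of_real (Cj C a b T B j t \<gamma>)" for j \<gamma>
  have pairing: "((\<lambda>m. fourier_coeff B h m * (LINT \<gamma>|lborel. f j \<gamma> * fourier_exp B (- m) \<gamma>))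
      has_sum (LINT \<gamma>|lborel. f j \<gamma> * h \<gamma>)) UNIV" for j
  proof (rule fourier_pairing_has_sum[OF B])
    show "continuous_on {0..B} h"
      unfolding h_def by (intro continuous_intros test_fun_continuous_on[OF tf])
    show "h B = h 0" using test_fun_eq_0[OF tf, of 0] test_fun_eq_0[OF tf, of B] by (simp add: h_def)
    show "(\<lambda>k. norm (fourier_coeff B h k)) summable_on UNIV"
      unfolding h_def[abs_def] by (rule fourier_coeff_modulated_test_fun_abs_summable[OF tf B])
    show "integrable lborel (f j)"
      unfolding f_def by (rule integrable_bounded_mult[OF _ cis_linear_measurable, where K=1])
        (simp_all add: Cj_integrable[OF C_int])
    show "\<And>x. x \<notin> {0..B} \<Longrightarrow> f j x = 0" by (simp add: f_def Cj_eq_0_outside)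
  qed
  have fh: "f j \<gamma> * h \<gamma> = of_real (\<phi> \<gamma>) * of_real (Cj C a b T B j t \<gamma>)" for j \<gamma>
  proof -
    have "f j \<gamma> * h \<gamma> = cis (- \<omega> * \<gamma> + \<omega> * \<gamma>) * (of_real (\<phi> \<gamma>) * of_real (Cj C a b T B j t \<gamma>))"
      unfolding f_def h_def cis_mult[symmetric] by (simp only: mult_ac)
    then show ?thesis by simp
  qed
  have S_eq: "S_term C c J T B r t \<phi> m = (\<Sum>j=1..J. A_ent c a b J r j *
      (fourier_coeff B h m * (LINT \<gamma>|lborel. f j \<gamma> * fourier_exp B (- m) \<gamma>)))" for m
  proof -
    have "S_term C c J T B r t \<phi> m
        = of_real (1 / B) * Pi_fun C c T (m * int J + int r) t * (of_real B * fourier_coeff B h m)"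
      unfolding S_term_def integral_test_fun_cis_eq_fourier_coeff[OF JBT B tf] h_def \<omega>_def ..
    then show ?thesis
      using B by (simp add: Pi_fun_eq_sum_fourier_exp[OF T B JBT C_int supp distinct c_per t]
          f_def \<omega>_def sum_distrib_left mult_ac)
  qed
  show ?thesis
    unfolding S_eq[abs_def] fh[symmetric] by (intro has_sum_sum has_sum_cmult_right pairing) simp
qed

lemma is_inverse_mat_solve:
  assumes inv: "is_inverse_mat J A V" and j: "j \<in> {1..J}"
    and y: "\<And>r. r \<in> {1..J} \<Longrightarrow> y r = (\<Sum>l=1..J. A r l * x l)"
  shows "(\<Sum>r=1..J. V j r * y r) = x j"
proof -
  have "(\<Sum>r=1..J. V j r * y r) = (\<Sum>r=1..J. \<Sum>l=1..J. V j r * A r l * x l)"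
    by (simp add: y sum_distrib_left mult_ac)
  also have "\<dots> = (\<Sum>l=1..J. (\<Sum>r=1..J. V j r * A r l) * x l)"
    by (subst sum.swap) (simp add: sum_distrib_right)
  also have "\<dots> = (\<Sum>l=1..J. if l = j then x l else 0)"
    using inv j unfolding is_inverse_mat_def by (intro sum.cong) auto
  also have "\<dots> = x j" using j by simp
  finally show ?thesis .
qed

theorem mainTheorem4:
  fixes J :: nat and T B :: real
    and C :: "real \<Rightarrow> real \<Rightarrow> real"
    and a b :: "nat \<Rightarrow> int"
    and c :: "int \<Rightarrow> complex"
  assumes J_prime: "prime J"
    and T_pos: "T > 0" and B_pos: "B > 0"
    and JBT: "real J * B * T = 1"
    and C_nonneg: "\<forall>t \<gamma>. C t \<gamma> \<ge> 0"
    and C_int: "\<forall>t. integrable lborel (\<lambda>\<gamma>. C t \<gamma>)"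
    and supp: "{(t, \<gamma>). C t \<gamma> \<noteq> 0} \<subseteq>
               (\<Union>j\<in>{1..J}. (\<lambda>(x, y). (x + of_int (a j) * T, y + of_int (b j) * B)) ` rect T B)"
    and distinct: "inj_on (\<lambda>j. (a j, b j)) {1..J}"
    and c_per: "\<forall>k. c (k + int J) = c k"
  shows
    "(\<forall>r\<in>{1..J}. \<forall>t\<in>{0..<T}. \<forall>\<phi>. test_fun {0<..<B} \<phi> \<longrightarrow>
        (S_term C c J T B r t \<phi> has_sum
           (LINT \<gamma>|lborel. of_real (\<phi> \<gamma>) *
               (\<Sum>j=1..J. A_ent c a b J r j * of_real (Cj C a b T B j t \<gamma>)))) UNIV)
     \<and>
     (\<forall>V. is_inverse_mat J (A_ent c a b J) V \<longrightarrow>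
        (\<forall>j\<in>{1..J}. \<forall>t\<in>{0..<T}. \<forall>\<phi>. test_fun {0<..<B} \<phi> \<longrightarrow>
            (LINT \<gamma>|lborel. of_real (\<phi> \<gamma>) * of_real (Cj C a b T B j t \<gamma>)) =
            (\<Sum>r=1..J. V j r * (\<Sum>\<^sub>\<infinity>m::int. S_term C c J T B r t \<phi> m)))
        \<and>
        (\<forall>t \<gamma>. C t \<gamma> = (\<Sum>j=1..J. Cj C a b T B j (t - of_int (a j) * T) (\<gamma> - of_int (b j) * B))))"
proof -
  have S_sum: "(S_term C c J T B r t \<phi> has_sum
      (\<Sum>j=1..J. A_ent c a b J r j * (LINT \<gamma>|lborel. of_real (\<phi> \<gamma>) * of_real (Cj C a b T B j t \<gamma>)))) UNIV"
    if "t \<in> {0..<T}" "test_fun {0<..<B} \<phi>" for r t \<phi>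
    using S_term_has_sum[OF T_pos B_pos JBT C_int supp distinct c_per _ _ that(2)] that by simp
  have recover: "(LINT \<gamma>|lborel. of_real (\<phi> \<gamma>) * of_real (Cj C a b T B j t \<gamma>)) =
      (\<Sum>r=1..J. V j r * (\<Sum>\<^sub>\<infinity>m::int. S_term C c J T B r t \<phi> m))"
    if "is_inverse_mat J (A_ent c a b J) V" "j \<in> {1..J}" "t \<in> {0..<T}" "test_fun {0<..<B} \<phi>"
    for V j t \<phi>
    by (rule is_inverse_mat_solve[OF that(1,2), symmetric]) (rule infsumI[OF S_sum[OF that(3,4)]])
  show ?thesis
  proof (intro conjI allI impI ballI)
    fix r t \<phi> assume "t \<in> {0..<T}" and tf: "test_fun {0<..<B} \<phi>"
    then show "(S_term C c J T B r t \<phi> has_sum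
        (LINT \<gamma>|lborel. of_real (\<phi> \<gamma>) * (\<Sum>j=1..J. A_ent c a b J r j * of_real (Cj C a b T B j t \<gamma>)))) UNIV"
      unfolding integral_test_fun_mult_sum_Cj[OF C_int tf] by (rule S_sum)
  qed (use recover scattering_eq_sum_Cj[OF T_pos B_pos supp distinct] in blast)+
qed

end
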